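(* Suppose the weight function $w$ satisfies $0<m\le w\le M$ almost everywhere. Then for every $n\ge1$ and each $1\le i\le n$, $$\frac mM(1-\xi_i^u(0))\le1-\xi_i^w(0)\le\frac Mm(1-\xi_i^u(0))\quad\text{and}\quad\frac mM(1+\xi_i^u(0))\le1+\xi_i^w(0)\le\frac Mm(1+\xi_i^u(0)).$$ Consequently there exist absolute constants $C,c>0$ such that for all $n\ge1$ and $1\le i\le n$, $$c\sqrt{\tfrac mM}\cdot\frac{n+1-i}{n}\le\sqrt{1-\xi_i^w(0)}\le C\sqrt{\tfrac Mm}\cdot\frac{n+1-i}n,\qquad c\sqrt{\tfrac mM}\cdot\frac in\le\sqrt{1+\xi_i^w(0)}\le C\sqrt{\tfrac Mm}\cdot\frac in.$$
   Context: A weight function is a non-negative integrable function on $[-1,1]$ with nonzero integral. For a weight function $v$ and $n\ge1$, $\xi_1^v(0)<\dots<\xi_n^v(0)$ denote the zeros of the degree-$n$ orthogonal polynomial with respect to $v(t)\,dt$ on $[-1,1]$. Here $u\equiv1$ is the constant weight, so $\xi_i^u(0)$ are the zeros of the Legendre polynomial $L_n(t)=\frac{1}{2^nn!}\frac{d^n}{dt^n}[(t^2-1)^n]$. *)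

theory Defs
  imports "HOL-Analysis.Analysis" "HOL-Computational_Algebra.Polynomial"
begin

definition weight_fn :: "(real \<Rightarrow> real) \<Rightarrow> bool" where
  "weight_fn v \<longleftrightarrow> (\<forall>t\<in>{-1..1}. 0 \<le> v t) \<and> v integrable_on {-1..1}
      \<and> integral {-1..1} v \<noteq> 0"

definition orth_poly :: "(real \<Rightarrow> real) \<Rightarrow> nat \<Rightarrow> real poly \<Rightarrow> bool" where
  "orth_poly v n p \<longleftrightarrow> degree p = n \<and> lead_coeff p = 1 \<and>
     (\<forall>q::real poly. degree q < n \<longrightarrow>
        integral {-1..1} (\<lambda>t. poly p t * poly q t * v t) = 0)"

definition xi :: "(real \<Rightarrow> real) \<Rightarrow> nat \<Rightarrow> nat \<Rightarrow> real" where
  "xi v n i = sorted_list_of_set {t::real. poly (THE p. orth_poly v n p) t = 0} ! (i - 1)"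

definition bounded_weight :: "(real \<Rightarrow> real) \<Rightarrow> real \<Rightarrow> real \<Rightarrow> bool" where
  "bounded_weight w m M \<longleftrightarrow> weight_fn w \<and> 0 < m \<and>
     (AE t in lebesgue. t \<in> {-1..1} \<longrightarrow> m \<le> w t \<and> w t \<le> M)"

end

theory Submission
  imports Defs
begin

text \<open>
  Zeros of orthogonal polynomials are compared through Gauss quadrature. If \<open>q\<close> has degree
  \<open>< n\<close> and vanishes at the \<open>i - 1\<close> smallest zeros of one orthogonal polynomial and at the
  \<open>n - i\<close> largest zeros of another, then the mean of \<open>x\<close> with respect to \<open>q\<^sup>2 dL\<close> lies
  above the \<open>i\<close>-th zero of the first and below the \<open>i\<close>-th zero of the second. Hence any
  inequality between the means of \<open>1 \<plusminus> x\<close> under \<open>q\<^sup>2 dL\<^sub>1\<close> and \<open>q\<^sup>2 dL\<^sub>2\<close> transfers to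
  the zeros. For \<open>m \<le> w \<le> M\<close> these means differ from the Lebesgue ones by at most a factor
  \<open>M / m\<close>, which gives the first claim. Comparing Lebesgue measure in the same way with the
  weights \<open>1 \<plusminus> cos t\<close> in the angle variable, whose orthogonal polynomials are the Chebyshev
  polynomials of the third and fourth kind with explicit zeros, traps the Legendre zero
  \<open>\<xi>\<^sub>i\<close> between \<open>cos ((2k - 1) \<pi> / (2n + 1))\<close> and \<open>cos (2k \<pi> / (2n + 1))\<close>, \<open>k = n + 1 - i\<close>;
  elementary bounds on \<open>1 - cos\<close> then yield the square-root estimates.
\<close>

section \<open>Linear functionals on real polynomials\<close>

locale poly_functional =
  fixes L :: "real poly \<Rightarrow> real"
  assumes L_add: "L (f + g) = L f + L g"
    and L_smult: "L (smult c f) = c * L f"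
begin

lemma L_zero [simp]: "L 0 = 0"
  using L_smult[of 0 0] by simp

lemma L_minus: "L (- f) = - L f"
  using L_smult[of "-1" f] by simp

lemma L_diff: "L (f - g) = L f - L g"
  using L_add[of f "- g"] L_minus[of g] by simp

lemma L_sum: "L (\<Sum>j\<in>A. f j) = (\<Sum>j\<in>A. L (f j))"
  by (induction A rule: infinite_finite_induct) (auto simp: L_add)

lemma L_one_minus_x_mult:
  "L ([:1, -1:] * q) = (1 - t) * L q - L ([:-t, 1:] * q)"
proof -
  have "L ([:1, -1:] * q) = L (smult (1 - t) q - [:-t, 1:] * q)"
    by (rule arg_cong[where f = L], rule poly_ext) (simp add: algebra_simps)
  then show ?thesis
    by (simp only: L_diff L_smult)
qed

lemma L_one_plus_x_mult:
  "L ([:1, 1:] * q) = (1 + t) * L q + L ([:-t, 1:] * q)"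
proof -
  have "L ([:1, 1:] * q) = L (smult (1 + t) q + [:-t, 1:] * q)"
    by (rule arg_cong[where f = L], rule poly_ext) (simp add: algebra_simps)
  then show ?thesis
    by (simp only: L_add L_smult)
qed

end

definition orthogonal_wrt :: "(real poly \<Rightarrow> real) \<Rightarrow> nat \<Rightarrow> real poly \<Rightarrow> bool" where
  "orthogonal_wrt L n p \<longleftrightarrow> degree p = n \<and> (\<forall>q. degree q < n \<longrightarrow> L (p * q) = 0)"

lemma (in poly_functional) orthogonal_wrtI_basis:
  assumes P: "\<And>j. j < n \<Longrightarrow> P j \<noteq> 0 \<and> degree (P j) = j"
    and orth: "\<And>j. j < n \<Longrightarrow> L (p * P j) = 0" and deg: "degree p = n"
  shows "orthogonal_wrt L n p"
proof -
  have "L (p * q) = 0" if "degree q < n" for q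
    using that
  proof (induction "degree q" arbitrary: q rule: less_induct)
    case less
    define d where "d = degree q"
    have Pd: "P d \<noteq> 0" "degree (P d) = d" using P less d_def by auto
    define q' where "q' = q - smult (lead_coeff q / lead_coeff (P d)) (P d)"
    have "lead_coeff (P d) \<noteq> 0"
      using Pd(1) by simp
    then have "coeff q' d = 0" "degree q' \<le> d"
      using Pd unfolding q'_def d_def by (auto intro: degree_diff_le)
    then have "q' = 0 \<or> degree q' < degree q"
      unfolding d_def by (metis le_neq_implies_less leading_coeff_0_iff)
    then have "L (p * q') = 0"
      using less by auto
    moreover have "p * q = p * q' + smult (lead_coeff q / lead_coeff (P d)) (p * P d)"
      unfolding q'_def by (simp add: algebra_simps)
    ultimately show ?case
      using orth less d_def by (simp add: L_add L_smult)
  qed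
  with deg show ?thesis
    unfolding orthogonal_wrt_def by blast
qed

function gram_schmidt :: "(real poly \<Rightarrow> real) \<Rightarrow> nat \<Rightarrow> real poly" where
  "gram_schmidt L n = monom 1 n -
     (\<Sum>j<n. smult (L (monom 1 n * gram_schmidt L j) / L (gram_schmidt L j * gram_schmidt L j))
                   (gram_schmidt L j))"
  by auto
termination by (relation "Wellfounded.measure snd") auto

declare gram_schmidt.simps [simp del]

locale definite_functional = poly_functional +
  assumes square_pos: "f \<noteq> 0 \<Longrightarrow> 0 < L (f * f)"
begin

lemma gram_schmidt_monic_orthogonal:
  "lead_coeff (gram_schmidt L n) = 1 \<and> orthogonal_wrt L n (gram_schmidt L n)"
proof (induction n rule: less_induct)
  case (less n)
  let ?P = "gram_schmidt L"
  define c where "c j = L (monom 1 n * ?P j) / L (?P j * ?P j)" for j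
  define S where "S = (\<Sum>j<n. smult (c j) (?P j))"
  have Pn: "?P n = monom 1 n - S"
    unfolding S_def c_def by (subst gram_schmidt.simps) simp
  have lower: "?P j \<noteq> 0" "degree (?P j) = j" if "j < n" for j
    using less[OF that] unfolding orthogonal_wrt_def by auto
  have "coeff S k = 0" if "n \<le> k" for k
    unfolding S_def coeff_sum using lower that by (auto intro!: sum.neutral coeff_eq_0)
  then have coeff_Pn: "coeff (?P n) n = 1" "\<And>k. n < k \<Longrightarrow> coeff (?P n) k = 0"
    by (simp_all add: Pn)
  then have deg: "degree (?P n) = n"
    by (metis degree_le le_antisym le_degree zero_neq_one)
  have lower_orth: "L (?P j * ?P k) = 0" if "j < n" "k < n" "j \<noteq> k" for j k
  proof (cases "j < k")
    case True
    then show ?thesis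
      using less that unfolding orthogonal_wrt_def by (simp add: mult.commute)
  next
    case False
    then show ?thesis
      using less that unfolding orthogonal_wrt_def by simp
  qed
  have "L (?P n * ?P k) = 0" if "k < n" for k
  proof -
    have "L (?P n * ?P k) = L (monom 1 n * ?P k) - (\<Sum>j<n. c j * L (?P j * ?P k))"
      by (simp add: Pn S_def left_diff_distrib sum_distrib_right
          L_diff L_sum L_smult)
    also have "(\<Sum>j<n. c j * L (?P j * ?P k)) = c k * L (?P k * ?P k)"
      using that lower_orth by (subst sum.remove[of _ k]) (auto intro!: sum.neutral)
    also have "\<dots> = L (monom 1 n * ?P k)"
      using square_pos lower[OF that] unfolding c_def by (simp add: less_imp_neq[symmetric])
    finally show ?thesis by simp
  qed
  then have "orthogonal_wrt L n (?P n)"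
    using lower deg by (intro orthogonal_wrtI_basis) auto
  with coeff_Pn deg show ?case
    by simp
qed

lemma monic_orthogonal_unique:
  assumes p: "orthogonal_wrt L n p" "lead_coeff p = 1"
    and q: "orthogonal_wrt L n q" "lead_coeff q = 1"
  shows "p = q"
proof (rule ccontr)
  assume "p \<noteq> q"
  have "coeff (p - q) k = 0" if "n \<le> k" for k
    using p q that unfolding orthogonal_wrt_def by (cases "k = n") (auto simp: coeff_eq_0)
  with \<open>p \<noteq> q\<close> have "degree (p - q) < n"
    by (metis diff_eq_diff_eq diff_self leading_coeff_0_iff not_le)
  then have "L ((p - q) * (p - q)) = 0"
    using p q unfolding orthogonal_wrt_def by (simp add: left_diff_distrib L_diff)
  with \<open>p \<noteq> q\<close> show False
    using square_pos[of "p - q"] by simp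
qed

end

section \<open>Zeros and Gauss quadrature\<close>

lemma constant_sign_if_even_root_orders:
  fixes f :: "real poly"
  assumes "f \<noteq> 0" "\<And>a. a \<in> {-1<..<1} \<Longrightarrow> poly f a = 0 \<Longrightarrow> even (order a f)"
  shows "(\<forall>x\<in>{-1..1}. 0 \<le> poly f x) \<or> (\<forall>x\<in>{-1..1}. poly f x \<le> 0)"
  using assms
proof (induction "degree f" arbitrary: f rule: less_induct)
  case (less f)
  show ?case
  proof (cases "\<exists>a\<in>{-1<..<1}. poly f a = 0")
    case True
    then obtain a where a: "a \<in> {-1<..<1}" "poly f a = 0" by blast
    with less.prems have "order a f \<noteq> 0" "even (order a f)"
      using order_root by blast+
    then have "2 \<le> order a f"
      by presburger
    then have "[:-a, 1:] ^ 2 dvd f"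
      using order_divides by blast
    then obtain g where g: "f = [:-a, 1:] ^ 2 * g"
      by (auto simp: dvd_def)
    with less.prems(1) have g0: "g \<noteq> 0" by auto
    have "even (order b g)" if b: "b \<in> {-1<..<1}" "poly g b = 0" for b
    proof -
      have "even (order b f)"
        using less.prems(2) b g by simp
      moreover have "order b f = order b ([:-a, 1:] ^ 2) + order b g"
        using g less.prems(1) by (simp add: order_mult)
      moreover have "order b ([:-a, 1:] ^ 2) \<in> {0, 2}"
        by (cases "b = a") (auto simp: order_power_n_n intro: order_0I)
      ultimately show ?thesis by auto
    qed
    moreover have "degree g < degree f"
      using g g0 by (simp add: degree_mult_eq degree_power_eq)
    ultimately have "(\<forall>x\<in>{-1..1}. 0 \<le> poly g x) \<or> (\<forall>x\<in>{-1..1}. poly g x \<le> 0)"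
      using less.hyps g0 by blast
    then show ?thesis
      unfolding g by (auto simp: mult_nonneg_nonpos)
  next
    case False
    show ?thesis
    proof (rule ccontr)
      assume "\<not> ?thesis"
      then obtain x y where xy: "x \<in> {-1..1}" "y \<in> {-1..1}" "poly f x < 0" "0 < poly f y"
        by (auto simp: not_le)
      moreover have "x \<noteq> y"
        using xy by auto
      ultimately obtain z where "min x y < z" "z < max x y" "poly f z = 0"
        using poly_IVT[of "min x y" "max x y" f]
        by (cases "x < y") (auto simp: min_def max_def mult_neg_pos mult_pos_neg)
      moreover have "-1 \<le> min x y" "max x y \<le> 1"
        using xy by auto
      ultimately have "z \<in> {-1<..<1}" "poly f z = 0"
        by auto
      with False show False
        by blast
    qed
  qed
qed

lemma order_prod_linear_factors:
  fixes S :: "real set"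
  assumes "finite S"
  shows "order b (\<Prod>a\<in>S. [:-a, 1:]) = (if b \<in> S then 1 else 0)"
proof (cases "b \<in> S")
  case True
  have "(\<Prod>a\<in>S. [:-a, 1:]) = [:-b, 1:] * (\<Prod>a\<in>S - {b}. [:-a, 1:])"
    using True assms by (simp add: prod.remove)
  moreover have "order b (\<Prod>a\<in>S - {b}. [:-a, 1:]) = 0"
    using assms by (intro order_0I) (simp add: poly_prod)
  moreover have "(\<Prod>a\<in>S. [:-a, 1::real:]) \<noteq> 0"
    using assms by auto
  ultimately have "order b (\<Prod>a\<in>S. [:-a, 1:]) = order b [:-b, 1:]"
    by (metis add.right_neutral order_mult)
  with True show ?thesis
    using order_power_n_n[of b 1] by simp
next
  case False
  then have "poly (\<Prod>a\<in>S. [:-a, 1:]) b \<noteq> 0"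
    using assms by (auto simp: poly_prod)
  with False show ?thesis
    by (simp add: order_0I)
qed

locale interval_positive_functional = poly_functional +
  assumes nonneg_pos: "f \<noteq> 0 \<Longrightarrow> \<forall>x\<in>{-1..1}. 0 \<le> poly f x \<Longrightarrow> 0 < L f"
begin

sublocale definite_functional
  by unfold_locales (auto intro: nonneg_pos)

text \<open>
  Were there fewer than \<open>n\<close> zeros of odd order in \<open>(-1, 1)\<close>, the product \<open>q\<close> of their linear
  factors would have degree \<open>< n\<close> and \<open>p q\<close> would not change sign on \<open>[-1, 1]\<close>, contradicting
  \<open>L (p q) = 0\<close>.
\<close>

lemma orthogonal_card_roots:
  assumes orth: "orthogonal_wrt L n p" and "p \<noteq> 0"
  shows "card {x. poly p x = 0} = n"
proof -
  define Z where "Z = {x. poly p x = 0}"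
  define S where "S = {a \<in> {-1<..<1}. poly p a = 0 \<and> odd (order a p)}"
  have "finite Z"
    unfolding Z_def using \<open>p \<noteq> 0\<close> by (rule poly_roots_finite)
  have "S \<subseteq> Z"
    unfolding S_def Z_def by auto
  have "card Z \<le> n"
    using card_poly_roots_bound[OF \<open>p \<noteq> 0\<close>] orth unfolding Z_def orthogonal_wrt_def by simp
  have "n \<le> card S"
  proof (rule ccontr)
    assume "\<not> n \<le> card S"
    have "finite S"
      using \<open>S \<subseteq> Z\<close> \<open>finite Z\<close> by (rule finite_subset)
    define q where "q = (\<Prod>a\<in>S. [:-a, 1:])"
    have "q \<noteq> 0"
      unfolding q_def using \<open>finite S\<close> by auto
    have "degree q = card S"
      unfolding q_def by (subst degree_prod_sum_eq) auto
    with orth \<open>\<not> n \<le> card S\<close> have "L (p * q) = 0"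
      unfolding orthogonal_wrt_def by auto
    have order_q: "order b q = (if b \<in> S then 1 else 0)" for b
      unfolding q_def using \<open>finite S\<close> by (rule order_prod_linear_factors)
    have "even (order b (p * q))" if "b \<in> {-1<..<1}" "poly (p * q) b = 0" for b
    proof -
      have "poly p b = 0"
      proof (rule ccontr)
        assume "poly p b \<noteq> 0"
        with that(2) have "order b q \<noteq> 0"
          using \<open>q \<noteq> 0\<close> order_root[of q b] by simp
        then have "b \<in> S"
          using order_q[of b] by (simp split: if_splits)
        with \<open>poly p b \<noteq> 0\<close> show False
          unfolding S_def by simp
      qed
      with that(1) have "odd (order b p) \<longleftrightarrow> b \<in> S"
        unfolding S_def by auto
      moreover have "order b (p * q) = order b p + order b q"
        using \<open>p \<noteq> 0\<close> \<open>q \<noteq> 0\<close> by (simp add: order_mult)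
      ultimately show ?thesis
        using order_q[of b] by auto
    qed
    then have "(\<forall>x\<in>{-1..1}. 0 \<le> poly (p * q) x) \<or> (\<forall>x\<in>{-1..1}. 0 \<le> poly (- (p * q)) x)"
      using constant_sign_if_even_root_orders[of "p * q"] \<open>p \<noteq> 0\<close> \<open>q \<noteq> 0\<close> by auto
    then have "L (p * q) \<noteq> 0"
      using nonneg_pos[of "p * q"] nonneg_pos[of "- (p * q)"] \<open>p \<noteq> 0\<close> \<open>q \<noteq> 0\<close>
      by (auto simp: L_minus)
    with \<open>L (p * q) = 0\<close> show False
      by contradiction
  qed
  moreover have "card S \<le> card Z"
    using \<open>S \<subseteq> Z\<close> \<open>finite Z\<close> by (rule card_mono[rotated])
  ultimately show ?thesis
    using \<open>card Z \<le> n\<close> unfolding Z_def by linarith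
qed

end

definition lagrange_basis :: "real set \<Rightarrow> real \<Rightarrow> real poly" where
  "lagrange_basis Z z = (\<Prod>y\<in>Z - {z}. smult (1 / (z - y)) [:-y, 1:])"

lemma poly_lagrange_basis_self: "poly (lagrange_basis Z z) z = 1"
  unfolding lagrange_basis_def poly_prod by (rule prod.neutral) (auto simp: divide_simps)

lemma poly_lagrange_basis_other:
  assumes "finite Z" "y \<in> Z" "y \<noteq> z"
  shows "poly (lagrange_basis Z z) y = 0"
  unfolding lagrange_basis_def poly_prod using assms by (auto intro: prod_zero)

lemma degree_lagrange_basis:
  assumes "finite Z" "z \<in> Z"
  shows "degree (lagrange_basis Z z) < card Z"
proof -
  have "degree (lagrange_basis Z z) \<le> (\<Sum>y\<in>Z - {z}. degree (smult (1 / (z - y)) [:-y, 1::real:]))"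
    unfolding lagrange_basis_def using assms(1)
    by (simp only: degree_prod_sum_le[of "Z - {z}", unfolded o_def] finite_Diff)
  also have "\<dots> \<le> card (Z - {z})"
    using sum_mono[of "Z - {z}" _ "\<lambda>_. 1"] by (simp add: degree_smult_le)
  also have "\<dots> < card Z"
    using assms by (rule card_Diff1_less)
  finally show ?thesis .
qed

lemma lagrange_interpolation:
  assumes "finite Z" "degree r < card Z"
  shows "r = (\<Sum>z\<in>Z. smult (poly r z) (lagrange_basis Z z))"
proof (rule poly_eqI_degree[of Z])
  fix x assume "x \<in> Z"
  have "poly (\<Sum>z\<in>Z. smult (poly r z) (lagrange_basis Z z)) x
      = (\<Sum>z\<in>Z. poly r z * poly (lagrange_basis Z z) x)"
    by (simp add: poly_sum)
  also have "\<dots> = poly r x"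
    using \<open>x \<in> Z\<close> assms(1) poly_lagrange_basis_other[OF assms(1)] poly_lagrange_basis_self
    by (subst sum.remove[of _ x]) (auto intro!: sum.neutral)
  finally show "poly r x = poly (\<Sum>z\<in>Z. smult (poly r z) (lagrange_basis Z z)) x" ..
next
  show "degree (\<Sum>z\<in>Z. smult (poly r z) (lagrange_basis Z z)) < card Z"
    using degree_lagrange_basis[OF assms(1)] assms
    by (intro degree_sum_less) (auto intro: le_less_trans[OF degree_smult_le])
qed (use assms in auto)

lemma (in definite_functional) gauss_quadrature:
  assumes orth: "orthogonal_wrt L n p" and card: "card {x. poly p x = 0} = n" and "1 \<le> n"
  obtains \<mu> where "\<And>z. poly p z = 0 \<Longrightarrow> 0 \<le> \<mu> z"
    and "\<And>f. degree f < 2 * n \<Longrightarrow> L f = (\<Sum>z | poly p z = 0. \<mu> z * poly f z)"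
proof -
  define Z where "Z = {x. poly p x = 0}"
  have "finite Z" "card Z = n"
    using card \<open>1 \<le> n\<close> unfolding Z_def by (auto intro: card_ge_0_finite)
  have "p \<noteq> 0" "degree p = n"
    using \<open>finite Z\<close> orth infinite_UNIV_char_0 unfolding Z_def orthogonal_wrt_def by auto
  define \<mu> where "\<mu> z = L (lagrange_basis Z z)" for z
  have quadrature: "L f = (\<Sum>z\<in>Z. \<mu> z * poly f z)" if "degree f < 2 * n" for f
  proof -
    define r where "r = f mod p"
    have "degree r < n"
      using degree_mod_less[OF \<open>p \<noteq> 0\<close>, of f] \<open>degree p = n\<close> \<open>1 \<le> n\<close> unfolding r_def
      by (cases "r = 0") auto
    have "degree (f div p) < n"
    proof (cases "f div p = 0")
      case False
      have "degree (p * (f div p)) = n + degree (f div p)"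
        using False \<open>p \<noteq> 0\<close> \<open>degree p = n\<close> by (simp add: degree_mult_eq)
      moreover have "p * (f div p) = f - r"
        unfolding r_def by (metis mult_div_mod_eq add_diff_cancel_right')
      then have "degree (p * (f div p)) < 2 * n"
        using degree_diff_le_max[of f r] that \<open>degree r < n\<close> by simp
      ultimately show ?thesis by simp
    qed (use \<open>1 \<le> n\<close> in simp)
    then have "L (p * (f div p)) = 0"
      using orth unfolding orthogonal_wrt_def by blast
    have "L f = L (p * (f div p) + r)"
      unfolding r_def by simp
    also have "\<dots> = L r"
      using \<open>L (p * (f div p)) = 0\<close> by (simp add: L_add)
    also have "L r = L (\<Sum>z\<in>Z. smult (poly r z) (lagrange_basis Z z))"
      using lagrange_interpolation[OF \<open>finite Z\<close>] \<open>degree r < n\<close> \<open>card Z = n\<close> by simp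
    also have "\<dots> = (\<Sum>z\<in>Z. poly r z * \<mu> z)"
      by (simp add: L_sum L_smult \<mu>_def)
    also have "\<dots> = (\<Sum>z\<in>Z. \<mu> z * poly f z)"
      unfolding r_def Z_def by (intro sum.cong refl) (simp add: poly_mod)
    finally show ?thesis .
  qed
  have "0 \<le> \<mu> z" if "z \<in> Z" for z
  proof -
    let ?l = "lagrange_basis Z z"
    have "degree (?l * ?l) < 2 * n"
      using degree_lagrange_basis[OF \<open>finite Z\<close> that] degree_mult_le[of ?l ?l] \<open>card Z = n\<close>
      by simp
    then have "L (?l * ?l) = (\<Sum>y\<in>Z. \<mu> y * poly (?l * ?l) y)"
      by (rule quadrature)
    also have "\<dots> = \<mu> z"
      using that \<open>finite Z\<close> poly_lagrange_basis_other[OF \<open>finite Z\<close>] poly_lagrange_basis_self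
      by (subst sum.remove[of _ z]) (auto intro!: sum.neutral)
    finally have "L (?l * ?l) = \<mu> z" .
    moreover have "?l \<noteq> 0"
      using poly_lagrange_basis_self[of Z z] by auto
    ultimately show ?thesis
      using square_pos by force
  qed
  with quadrature show thesis
    using that unfolding Z_def by blast
qed

lemma (in definite_functional) orthogonal_shifted_square_sign:
  assumes orth: "orthogonal_wrt L n p" and card: "card {x. poly p x = 0} = n" and "1 \<le> n"
    and "degree q < n"
  shows "(\<And>z. poly p z = 0 \<Longrightarrow> poly q z \<noteq> 0 \<Longrightarrow> t \<le> z) \<Longrightarrow> 0 \<le> L ([:-t, 1:] * q * q)"
    and "(\<And>z. poly p z = 0 \<Longrightarrow> poly q z \<noteq> 0 \<Longrightarrow> z \<le> t) \<Longrightarrow> L ([:-t, 1:] * q * q) \<le> 0"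
proof -
  obtain \<mu> where \<mu>: "\<And>z. poly p z = 0 \<Longrightarrow> 0 \<le> \<mu> z"
    and quadrature: "\<And>f. degree f < 2 * n \<Longrightarrow> L f = (\<Sum>z | poly p z = 0. \<mu> z * poly f z)"
    using gauss_quadrature[OF assms(1-3)] by blast
  have "degree ([:-t, 1:] * q * q) < 2 * n"
    using degree_mult_le[of "[:-t, 1:] * q" q] degree_mult_le[of "[:-t, 1:]" q] \<open>degree q < n\<close>
    by simp
  then have L_eq: "L ([:-t, 1:] * q * q) = (\<Sum>z | poly p z = 0. \<mu> z * ((z - t) * (poly q z)\<^sup>2))"
    by (simp add: quadrature power2_eq_square algebra_simps)
  show "0 \<le> L ([:-t, 1:] * q * q)" if "\<And>z. poly p z = 0 \<Longrightarrow> poly q z \<noteq> 0 \<Longrightarrow> t \<le> z"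
    unfolding L_eq using \<mu> that by (intro sum_nonneg) (force intro: mult_nonneg_nonneg)
  show "L ([:-t, 1:] * q * q) \<le> 0" if "\<And>z. poly p z = 0 \<Longrightarrow> poly q z \<noteq> 0 \<Longrightarrow> z \<le> t"
    unfolding L_eq using \<mu> that
    by (intro sum_nonpos) (force intro: mult_nonneg_nonpos mult_nonpos_nonneg)
qed

section \<open>Comparison of zeros\<close>

definition nth_zero :: "real poly \<Rightarrow> nat \<Rightarrow> real" where
  "nth_zero p i = sorted_list_of_set {x. poly p x = 0} ! (i - 1)"

lemma sorted_nth_le_if_notin_take:
  assumes "sorted xs" "z \<in> set xs" "z \<notin> set (take k xs)" "k < length xs"
  shows "xs ! k \<le> z"
proof -
  obtain j where "j < length xs" "z = xs ! j"
    using assms(2) by (auto simp: in_set_conv_nth)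
  moreover have "k \<le> j"
  proof (rule ccontr)
    assume "\<not> k \<le> j"
    with calculation have "take k xs ! j = z" "j < length (take k xs)"
      by auto
    with assms(3) show False
      by (metis nth_mem)
  qed
  ultimately show ?thesis
    using assms(1) by (simp add: sorted_nth_mono)
qed

lemma sorted_le_nth_if_notin_drop:
  assumes "sorted xs" "z \<in> set xs" "z \<notin> set (drop (Suc k) xs)" "k < length xs"
  shows "z \<le> xs ! k"
proof -
  obtain j where "j < length xs" "z = xs ! j"
    using assms(2) by (auto simp: in_set_conv_nth)
  moreover have "j \<le> k"
  proof (rule ccontr)
    assume "\<not> j \<le> k"
    with calculation have "drop (Suc k) xs ! (j - Suc k) = z" "j - Suc k < length (drop (Suc k) xs)"
      by auto
    with assms(3) show False
      by (metis nth_mem)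
  qed
  ultimately show ?thesis
    using assms(1,4) by (simp add: sorted_nth_mono)
qed

lemma separating_poly_exists:
  assumes "card {x. poly p1 x = 0} = n" "card {x. poly p2 x = 0} = n" "1 \<le> i" "i \<le> n"
  obtains q where "q \<noteq> 0" "degree q < n"
    "\<And>z. poly p1 z = 0 \<Longrightarrow> poly q z \<noteq> 0 \<Longrightarrow> nth_zero p1 i \<le> z"
    "\<And>z. poly p2 z = 0 \<Longrightarrow> poly q z \<noteq> 0 \<Longrightarrow> z \<le> nth_zero p2 i"
proof -
  define s1 where "s1 = sorted_list_of_set {x. poly p1 x = 0}"
  define s2 where "s2 = sorted_list_of_set {x. poly p2 x = 0}"
  define A where "A = set (take (i - 1) s1)"
  define B where "B = set (drop i s2)"
  define q where "q = (\<Prod>a\<in>A. [:-a, 1::real:]) * (\<Prod>b\<in>B. [:-b, 1:])"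
  have "finite {x. poly p1 x = 0}" "finite {x. poly p2 x = 0}"
    using assms by (auto intro: card_ge_0_finite)
  then have "length s1 = n" "length s2 = n" "distinct s1" "distinct s2"
    "set s1 = {x. poly p1 x = 0}" "set s2 = {x. poly p2 x = 0}" "sorted s1" "sorted s2"
    using assms unfolding s1_def s2_def by auto
  then have "card A = i - 1" "card B = n - i"
    unfolding A_def B_def using assms by (simp_all add: distinct_card)
  moreover have "degree q = card A + card B"
    unfolding q_def by (subst degree_mult_eq) (auto simp: degree_prod_sum_eq A_def B_def)
  ultimately have "degree q < n"
    using assms by simp
  moreover have "q \<noteq> 0"
    unfolding q_def A_def B_def by auto
  moreover have "nth_zero p1 i \<le> z" if "poly p1 z = 0" "poly q z \<noteq> 0" for z
    unfolding nth_zero_def s1_def[symmetric]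
  proof (rule sorted_nth_le_if_notin_take)
    show "z \<notin> set (take (i - 1) s1)"
      using that(2) unfolding q_def A_def by (auto simp: poly_prod)
  qed (use that assms \<open>length s1 = n\<close> \<open>sorted s1\<close> \<open>set s1 = _\<close> in auto)
  moreover have "z \<le> nth_zero p2 i" if "poly p2 z = 0" "poly q z \<noteq> 0" for z
    unfolding nth_zero_def s2_def[symmetric]
  proof (rule sorted_le_nth_if_notin_drop)
    show "z \<notin> set (drop (Suc (i - 1)) s2)"
      using that(2) assms unfolding q_def B_def by (auto simp: poly_prod)
  qed (use that assms \<open>length s2 = n\<close> \<open>sorted s2\<close> \<open>set s2 = _\<close> in auto)
  ultimately show thesis
    using that by blast
qed

lemma scaled_le_of_ratio_bounds:
  fixes c s1 s2 A1 A2 P1 P2 :: real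
  assumes "0 \<le> c" "0 < P1" "0 < P2" "A1 \<le> s1 * P1" "s2 * P2 \<le> A2"
    and "c * A2 * P1 \<le> A1 * P2"
  shows "c * s2 \<le> s1"
proof -
  have "c * s2 * (P1 * P2) = c * (s2 * P2) * P1"
    by (simp add: algebra_simps)
  also have "\<dots> \<le> c * A2 * P1"
    using assms by (intro mult_right_mono mult_left_mono) auto
  also have "\<dots> \<le> A1 * P2"
    by fact
  also have "\<dots> \<le> s1 * (P1 * P2)"
    using assms by (simp add: mult_right_mono mult.assoc[symmetric])
  finally show ?thesis
    using assms(2,3) by simp
qed

lemma compare_zeros_one_minus:
  assumes "definite_functional L1" "orthogonal_wrt L1 n p1" "card {x. poly p1 x = 0} = n"
    and "definite_functional L2" "orthogonal_wrt L2 n p2" "card {x. poly p2 x = 0} = n"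
    and "1 \<le> i" "i \<le> n" "0 \<le> c"
    and hyp: "\<And>q. q \<noteq> 0 \<Longrightarrow> degree q < n \<Longrightarrow>
       c * L2 ([:1, -1:] * q * q) * L1 (q * q) \<le> L1 ([:1, -1:] * q * q) * L2 (q * q)"
  shows "c * (1 - nth_zero p2 i) \<le> 1 - nth_zero p1 i"
proof -
  interpret L1: definite_functional L1 by fact
  interpret L2: definite_functional L2 by fact
  obtain q where q: "q \<noteq> 0" "degree q < n"
    "\<And>z. poly p1 z = 0 \<Longrightarrow> poly q z \<noteq> 0 \<Longrightarrow> nth_zero p1 i \<le> z"
    "\<And>z. poly p2 z = 0 \<Longrightarrow> poly q z \<noteq> 0 \<Longrightarrow> z \<le> nth_zero p2 i"
    using separating_poly_exists[OF assms(3,6-8)] by blast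
  have "1 \<le> n"
    using assms by simp
  have "0 \<le> L1 ([:-nth_zero p1 i, 1:] * q * q)"
    by (rule L1.orthogonal_shifted_square_sign(1)[OF assms(2,3) \<open>1 \<le> n\<close> q(2)]) (rule q(3))
  moreover have "L2 ([:-nth_zero p2 i, 1:] * q * q) \<le> 0"
    by (rule L2.orthogonal_shifted_square_sign(2)[OF assms(5,6) \<open>1 \<le> n\<close> q(2)]) (rule q(4))
  ultimately have "L1 ([:1, -1:] * q * q) \<le> (1 - nth_zero p1 i) * L1 (q * q)"
    "(1 - nth_zero p2 i) * L2 (q * q) \<le> L2 ([:1, -1:] * q * q)"
    using L1.L_one_minus_x_mult[of "q * q" "nth_zero p1 i"]
      L2.L_one_minus_x_mult[of "q * q" "nth_zero p2 i"] by (simp_all only: mult.assoc)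
  moreover have "0 < L1 (q * q)" "0 < L2 (q * q)"
    using q(1) by (simp_all add: L1.square_pos L2.square_pos)
  ultimately show ?thesis
    using scaled_le_of_ratio_bounds \<open>0 \<le> c\<close> hyp[OF q(1,2)] by blast
qed

lemma compare_zeros_one_plus:
  assumes "definite_functional L1" "orthogonal_wrt L1 n p1" "card {x. poly p1 x = 0} = n"
    and "definite_functional L2" "orthogonal_wrt L2 n p2" "card {x. poly p2 x = 0} = n"
    and "1 \<le> i" "i \<le> n" "0 \<le> c"
    and hyp: "\<And>q. q \<noteq> 0 \<Longrightarrow> degree q < n \<Longrightarrow>
       c * L2 ([:1, 1:] * q * q) * L1 (q * q) \<le> L1 ([:1, 1:] * q * q) * L2 (q * q)"
  shows "c * (1 + nth_zero p2 i) \<le> 1 + nth_zero p1 i"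
proof -
  interpret L1: definite_functional L1 by fact
  interpret L2: definite_functional L2 by fact
  obtain q where q: "q \<noteq> 0" "degree q < n"
    "\<And>z. poly p2 z = 0 \<Longrightarrow> poly q z \<noteq> 0 \<Longrightarrow> nth_zero p2 i \<le> z"
    "\<And>z. poly p1 z = 0 \<Longrightarrow> poly q z \<noteq> 0 \<Longrightarrow> z \<le> nth_zero p1 i"
    using separating_poly_exists[OF assms(6,3,7,8)] by blast
  have "1 \<le> n"
    using assms by simp
  have "L1 ([:-nth_zero p1 i, 1:] * q * q) \<le> 0"
    by (rule L1.orthogonal_shifted_square_sign(2)[OF assms(2,3) \<open>1 \<le> n\<close> q(2)]) (rule q(4))
  moreover have "0 \<le> L2 ([:-nth_zero p2 i, 1:] * q * q)"
    by (rule L2.orthogonal_shifted_square_sign(1)[OF assms(5,6) \<open>1 \<le> n\<close> q(2)]) (rule q(3))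
  ultimately have "L1 ([:1, 1:] * q * q) \<le> (1 + nth_zero p1 i) * L1 (q * q)"
    "(1 + nth_zero p2 i) * L2 (q * q) \<le> L2 ([:1, 1:] * q * q)"
    using L1.L_one_plus_x_mult[of "q * q" "nth_zero p1 i"]
      L2.L_one_plus_x_mult[of "q * q" "nth_zero p2 i"] by (simp_all only: mult.assoc)
  moreover have "0 < L1 (q * q)" "0 < L2 (q * q)"
    using q(1) by (simp_all add: L1.square_pos L2.square_pos)
  ultimately show ?thesis
    using scaled_le_of_ratio_bounds \<open>0 \<le> c\<close> hyp[OF q(1,2)] by blast
qed

section \<open>Weights on \<open>[-1, 1]\<close>\<close>

definition weighted_integral :: "(real \<Rightarrow> real) \<Rightarrow> real poly \<Rightarrow> real" where
  "weighted_integral v f = integral {-1..1} (\<lambda>t. poly f t * v t)"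

lemma weight_fn_poly_integrable:
  assumes "weight_fn v"
  shows "(\<lambda>t. poly f t * v t) integrable_on {-1..1}"
proof -
  have "(\<lambda>t. poly f t * v t) absolutely_integrable_on {-1..1}"
  proof (rule absolutely_integrable_bounded_measurable_product_real)
    show "poly f \<in> borel_measurable (lebesgue_on {-1..1})"
      by (rule continuous_imp_measurable_on_sets_lebesgue) (auto intro: continuous_intros)
    show "bounded (poly f ` {-1..1})"
      by (intro compact_imp_bounded compact_continuous_image) (auto intro: continuous_intros)
    show "v absolutely_integrable_on {-1..1}"
      using assms unfolding weight_fn_def by (intro nonnegative_absolutely_integrable_1) auto
  qed auto
  then show ?thesis
    by (simp add: absolutely_integrable_on_def)
qed

lemma poly_functional_weighted_integral:
  assumes "weight_fn v"
  shows "poly_functional (weighted_integral v)"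
proof
  fix f g
  show "weighted_integral v (f + g) = weighted_integral v f + weighted_integral v g"
    unfolding weighted_integral_def
    using integral_add[OF weight_fn_poly_integrable[OF assms, of f] weight_fn_poly_integrable[OF assms, of g]]
    by (simp add: distrib_right)
next
  fix c f
  show "weighted_integral v (smult c f) = c * weighted_integral v f"
    unfolding weighted_integral_def by (simp add: mult.assoc)
qed

lemma integral_poly_nonneg:
  fixes f :: "real poly"
  assumes "\<And>x. x \<in> {-1..1} \<Longrightarrow> 0 \<le> poly f x"
  shows "0 \<le> integral {-1..1} (poly f)"
  using assms by (intro integral_nonneg integrable_continuous_real) (auto intro: continuous_intros)

lemma integral_poly_pos:
  fixes f :: "real poly"
  assumes "f \<noteq> 0" "\<And>x. x \<in> {-1..1} \<Longrightarrow> 0 \<le> poly f x"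
  shows "0 < integral {-1..1} (poly f)"
proof -
  have "poly f integrable_on {-1..1}"
    by (intro integrable_continuous_real) (auto intro: continuous_intros)
  have "integral {-1..1} (poly f) \<noteq> 0"
  proof
    assume "integral {-1..1} (poly f) = 0"
    with \<open>poly f integrable_on {-1..1}\<close> have "(poly f has_integral 0) (cbox (-1) 1)"
      by (metis cbox_interval integrable_integral)
    then have "poly f x = 0" if "x \<in> {-1..1}" for x
      using assms(2) that
      by (intro has_integral_0_cbox_imp_0[of "-1" 1 "poly f"]) (auto intro: continuous_intros simp: box_real)
    then have "{-1..1::real} \<subseteq> {x. poly f x = 0}"
      by auto
    then have "finite {-1..1::real}"
      using poly_roots_finite[OF assms(1)] by (rule finite_subset)
    then show False
      using infinite_Icc[of "-1::real" 1] by simp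
  qed
  with integral_poly_nonneg[OF assms(2)] show ?thesis
    by simp
qed

lemma bounded_weight_exceptional_set:
  assumes "bounded_weight w m M"
  obtains N where "negligible N" "\<And>t. t \<in> {-1..1} - N \<Longrightarrow> m \<le> w t \<and> w t \<le> M"
proof -
  have "AE t in lebesgue. t \<in> {-1..1} \<longrightarrow> m \<le> w t \<and> w t \<le> M"
    using assms unfolding bounded_weight_def by blast
  then obtain N where N: "{t \<in> space lebesgue. \<not> (t \<in> {-1..1} \<longrightarrow> m \<le> w t \<and> w t \<le> M)} \<subseteq> N"
    "emeasure lebesgue N = 0" "N \<in> sets lebesgue"
    by (rule AE_E)
  then have "negligible N"
    unfolding negligible_iff_null_sets by (simp add: null_sets_def)
  with N(1) show thesis
    using that by auto
qed

lemma bounded_weight_pos_le: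
  assumes "bounded_weight w m M"
  shows "0 < m" "m \<le> M"
proof -
  show "0 < m"
    using assms unfolding bounded_weight_def by blast
  obtain N where N: "negligible N" "\<And>t. t \<in> {-1..1} - N \<Longrightarrow> m \<le> w t \<and> w t \<le> M"
    using bounded_weight_exceptional_set[OF assms] by blast
  have "\<not> negligible {-1..1::real}"
    by (simp add: negligible_iff_measure0)
  then obtain t where "t \<in> {-1..1::real} - N"
    using N(1) negligible_subset by blast
  with N(2) have "m \<le> w t" "w t \<le> M"
    by auto
  then show "m \<le> M"
    by linarith
qed

lemma bounded_weight_integral_bounds:
  assumes "bounded_weight w m M" and nonneg: "\<And>x. x \<in> {-1..1} \<Longrightarrow> 0 \<le> poly g x"
  shows "m * integral {-1..1} (poly g) \<le> weighted_integral w g"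
    and "weighted_integral w g \<le> M * integral {-1..1} (poly g)"
proof -
  obtain N where N: "negligible N" "\<And>t. t \<in> {-1..1} - N \<Longrightarrow> m \<le> w t \<and> w t \<le> M"
    using bounded_weight_exceptional_set[OF assms(1)] by blast
  define w' where "w' t = max m (min M (w t))" for t
  have "m \<le> w' t" "w' t \<le> M" for t
    unfolding w'_def using bounded_weight_pos_le(2)[OF assms(1)] by auto
  have same: "poly g t * w' t = poly g t * w t" if "t \<in> {-1..1} - N" for t
    using N(2)[OF that] unfolding w'_def by auto
  have int_w': "(\<lambda>t. poly g t * w' t) integrable_on {-1..1}"
    using assms(1) same unfolding bounded_weight_def
    by (intro integrable_spike[OF weight_fn_poly_integrable[of w g] N(1)]) auto
  have "weighted_integral w g = integral {-1..1} (\<lambda>t. poly g t * w' t)"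
    unfolding weighted_integral_def by (rule integral_spike[OF N(1)]) (use same in auto)
  moreover have int_c: "(\<lambda>t. c * poly g t) integrable_on {-1..1}" for c
    by (intro integrable_continuous_real continuous_intros)
  moreover have "integral {-1..1} (\<lambda>t. m * poly g t) \<le> integral {-1..1} (\<lambda>t. poly g t * w' t)"
    using nonneg \<open>\<And>t. m \<le> w' t\<close>
    by (intro integral_le[OF int_c int_w']) (simp add: mult.commute mult_right_mono)
  moreover have "integral {-1..1} (\<lambda>t. poly g t * w' t) \<le> integral {-1..1} (\<lambda>t. M * poly g t)"
    using nonneg \<open>\<And>t. w' t \<le> M\<close>
    by (intro integral_le[OF int_w' int_c]) (simp add: mult.commute mult_right_mono)
  ultimately show "m * integral {-1..1} (poly g) \<le> weighted_integral w g"
    and "weighted_integral w g \<le> M * integral {-1..1} (poly g)"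
    by simp_all
qed

lemma interval_positive_weighted_integral:
  assumes "bounded_weight w m M"
  shows "interval_positive_functional (weighted_integral w)"
proof -
  interpret poly_functional "weighted_integral w"
    using assms unfolding bounded_weight_def by (intro poly_functional_weighted_integral) blast
  show ?thesis
  proof
    fix f :: "real poly"
    assume "f \<noteq> 0" "\<forall>x\<in>{-1..1}. 0 \<le> poly f x"
    then have "0 < m * integral {-1..1} (poly f)"
      using assms integral_poly_pos unfolding bounded_weight_def by auto
    also have "\<dots> \<le> weighted_integral w f"
      using bounded_weight_integral_bounds(1)[OF assms] \<open>\<forall>x\<in>{-1..1}. 0 \<le> poly f x\<close> by blast
    finally show "0 < weighted_integral w f" .
  qed
qed

lemma weighted_integral_one: "weighted_integral (\<lambda>_. 1) f = integral {-1..1} (poly f)"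
  unfolding weighted_integral_def by simp

lemma bounded_weight_one: "bounded_weight (\<lambda>_. 1) 1 1"
  unfolding bounded_weight_def weight_fn_def by auto

lemma xi_eq_nth_zero_gram_schmidt:
  assumes "definite_functional (weighted_integral v)"
  shows "xi v n i = nth_zero (gram_schmidt (weighted_integral v) n) i"
proof -
  interpret definite_functional "weighted_integral v" by fact
  have orth_poly_iff: "orth_poly v n p \<longleftrightarrow> lead_coeff p = 1 \<and> orthogonal_wrt (weighted_integral v) n p" for p
    unfolding orth_poly_def orthogonal_wrt_def weighted_integral_def by (auto simp: mult.assoc)
  have "(THE p. orth_poly v n p) = gram_schmidt (weighted_integral v) n"
    using gram_schmidt_monic_orthogonal monic_orthogonal_unique unfolding orth_poly_iff by blast
  then show ?thesis
    unfolding xi_def nth_zero_def by simp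
qed

lemma bounded_weight_gram_schmidt:
  assumes "bounded_weight w m M"
  defines "L \<equiv> weighted_integral w"
  shows "definite_functional L" "orthogonal_wrt L n (gram_schmidt L n)"
    "card {x. poly (gram_schmidt L n) x = 0} = n" "xi w n i = nth_zero (gram_schmidt L n) i"
proof -
  interpret interval_positive_functional L
    unfolding L_def by (rule interval_positive_weighted_integral[OF assms(1)])
  show definite: "definite_functional L"
    unfolding definite_functional_def definite_functional_axioms_def
    using poly_functional_axioms square_pos by blast
  show "orthogonal_wrt L n (gram_schmidt L n)"
    using gram_schmidt_monic_orthogonal by blast
  moreover have "gram_schmidt L n \<noteq> 0"
    using gram_schmidt_monic_orthogonal[of n] by auto
  ultimately show "card {x. poly (gram_schmidt L n) x = 0} = n"
    by (intro orthogonal_card_roots)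
  show "xi w n i = nth_zero (gram_schmidt L n) i"
    using xi_eq_nth_zero_gram_schmidt definite unfolding L_def by blast
qed

lemma scaled_product_le:
  fixes m M A B I J :: real
  assumes "0 < m" "m \<le> M" "m * I \<le> A" "B \<le> M * J" "0 \<le> I" "0 \<le> J"
  shows "m / M * I * B \<le> A * J"
proof -
  have "m / M * I * B \<le> m / M * I * (M * J)"
    using assms by (intro mult_left_mono) auto
  also have "\<dots> = (m * I) * J"
    using assms by simp
  also have "\<dots> \<le> A * J"
    using assms by (intro mult_right_mono) auto
  finally show ?thesis .
qed

lemma bounded_weight_ratio_comparison:
  assumes bw: "bounded_weight w m M" and a: "\<And>x. x \<in> {-1..1} \<Longrightarrow> 0 \<le> poly (a * q * q) x"
  defines "Lw \<equiv> weighted_integral w" and "Lu \<equiv> weighted_integral (\<lambda>_. 1)"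
  shows "m / M * Lu (a * q * q) * Lw (q * q) \<le> Lw (a * q * q) * Lu (q * q)"
    and "m / M * Lw (a * q * q) * Lu (q * q) \<le> Lu (a * q * q) * Lw (q * q)"
proof -
  have "0 < m" "m \<le> M"
    by (fact bounded_weight_pos_le[OF bw])+
  have q: "\<And>x. x \<in> {-1..1} \<Longrightarrow> 0 \<le> poly (q * q) x"
    by simp
  note bounds = bounded_weight_integral_bounds[OF bw, folded Lw_def]
  show "m / M * Lu (a * q * q) * Lw (q * q) \<le> Lw (a * q * q) * Lu (q * q)"
    unfolding Lu_def weighted_integral_one
    using \<open>0 < m\<close> \<open>m \<le> M\<close> bounds(1)[OF a] bounds(2)[OF q] integral_poly_nonneg[OF a]
      integral_poly_nonneg[OF q]
    by (rule scaled_product_le)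
  have "m / M * Lu (q * q) * Lw (a * q * q) \<le> Lw (q * q) * Lu (a * q * q)"
    unfolding Lu_def weighted_integral_one
    using \<open>0 < m\<close> \<open>m \<le> M\<close> bounds(1)[OF q] bounds(2)[OF a] integral_poly_nonneg[OF q]
      integral_poly_nonneg[OF a]
    by (rule scaled_product_le)
  then show "m / M * Lw (a * q * q) * Lu (q * q) \<le> Lu (a * q * q) * Lw (q * q)"
    by (simp add: ac_simps)
qed

lemma one_plus_minus_x_square_nonneg:
  fixes q :: "real poly"
  assumes "x \<in> {-1..1}"
  shows "0 \<le> poly ([:1, -1:] * q * q) x" "0 \<le> poly ([:1, 1:] * q * q) x"
proof -
  have "poly ([:1, -1:] * q * q) x = (1 - x) * (poly q x)\<^sup>2"
    and "poly ([:1, 1:] * q * q) x = (1 + x) * (poly q x)\<^sup>2"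
    by (simp_all add: algebra_simps power2_eq_square)
  with assms show "0 \<le> poly ([:1, -1:] * q * q) x" "0 \<le> poly ([:1, 1:] * q * q) x"
    by simp_all
qed

lemma le_scaled_if_scaled_le:
  fixes m M x y :: real
  assumes "0 < m" "m \<le> M" "m / M * x \<le> y"
  shows "x \<le> M / m * y"
proof -
  have "x = M / m * (m / M * x)"
    using assms by simp
  also have "\<dots> \<le> M / m * y"
    using assms by (intro mult_left_mono) auto
  finally show ?thesis .
qed

lemma xi_weight_comparison:
  assumes bw: "bounded_weight w m M" and i: "1 \<le> i" "i \<le> n"
  shows "m / M * (1 - xi (\<lambda>_. 1) n i) \<le> 1 - xi w n i"
    and "1 - xi w n i \<le> M / m * (1 - xi (\<lambda>_. 1) n i)"
    and "m / M * (1 + xi (\<lambda>_. 1) n i) \<le> 1 + xi w n i"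
    and "1 + xi w n i \<le> M / m * (1 + xi (\<lambda>_. 1) n i)"
proof -
  note W = bounded_weight_gram_schmidt[OF bw]
  note U = bounded_weight_gram_schmidt[OF bounded_weight_one]
  have "0 < m" "m \<le> M"
    by (fact bounded_weight_pos_le[OF bw])+
  then have "0 \<le> m / M"
    by simp
  note one_minus = one_plus_minus_x_square_nonneg(1) and one_plus = one_plus_minus_x_square_nonneg(2)
  note undo = le_scaled_if_scaled_le[OF \<open>0 < m\<close> \<open>m \<le> M\<close>]
  show "m / M * (1 - xi (\<lambda>_. 1) n i) \<le> 1 - xi w n i"
    unfolding W(4) U(4)
    by (rule compare_zeros_one_minus[OF W(1-3) U(1-3) i \<open>0 \<le> m / M\<close>])
      (rule bounded_weight_ratio_comparison(1)[OF bw one_minus])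
  show "m / M * (1 + xi (\<lambda>_. 1) n i) \<le> 1 + xi w n i"
    unfolding W(4) U(4)
    by (rule compare_zeros_one_plus[OF W(1-3) U(1-3) i \<open>0 \<le> m / M\<close>])
      (rule bounded_weight_ratio_comparison(1)[OF bw one_plus])
  have "m / M * (1 - xi w n i) \<le> 1 - xi (\<lambda>_. 1) n i"
    unfolding W(4) U(4)
    by (rule compare_zeros_one_minus[OF U(1-3) W(1-3) i \<open>0 \<le> m / M\<close>])
      (rule bounded_weight_ratio_comparison(2)[OF bw one_minus])
  then show "1 - xi w n i \<le> M / m * (1 - xi (\<lambda>_. 1) n i)"
    by (rule undo)
  have "m / M * (1 + xi w n i) \<le> 1 + xi (\<lambda>_. 1) n i"
    unfolding W(4) U(4)
    by (rule compare_zeros_one_plus[OF U(1-3) W(1-3) i \<open>0 \<le> m / M\<close>])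
      (rule bounded_weight_ratio_comparison(2)[OF bw one_plus])
  then show "1 + xi w n i \<le> M / m * (1 + xi (\<lambda>_. 1) n i)"
    by (rule undo)
qed

section \<open>Integrals in the angle variable\<close>

definition theta_integral :: "(real \<Rightarrow> real) \<Rightarrow> real poly \<Rightarrow> real" where
  "theta_integral g f = integral {0..pi} (\<lambda>t. poly f (cos t) * g t)"

lemma theta_integrable:
  "continuous_on {0..pi} g \<Longrightarrow> (\<lambda>t. poly f (cos t) * g t) integrable_on {0..pi}"
  by (intro integrable_continuous_real continuous_intros)

lemma poly_functional_theta_integral:
  assumes "continuous_on {0..pi} g"
  shows "poly_functional (theta_integral g)"
proof
  fix f h
  show "theta_integral g (f + h) = theta_integral g f + theta_integral g h"
    unfolding theta_integral_def
    using integral_add[OF theta_integrable[OF assms, of f] theta_integrable[OF assms, of h]]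
    by (simp add: distrib_right)
next
  fix c f
  show "theta_integral g (smult c f) = c * theta_integral g f"
    unfolding theta_integral_def by (simp add: mult.assoc)
qed

lemma definite_theta_integral:
  assumes g: "continuous_on {0..pi} g" "\<And>t. t \<in> {0..pi} \<Longrightarrow> 0 \<le> g t"
    "\<And>t. t \<in> {0<..<pi} \<Longrightarrow> 0 < g t"
  shows "definite_functional (theta_integral g)"
proof -
  interpret poly_functional "theta_integral g"
    using g(1) by (rule poly_functional_theta_integral)
  show ?thesis
  proof
    fix f :: "real poly"
    assume "f \<noteq> 0"
    define h where "h t = poly (f * f) (cos t) * g t" for t
    have "continuous_on {0..pi} h"
      unfolding h_def by (intro continuous_intros g(1))
    moreover have h_nonneg: "0 \<le> h t" if "t \<in> {0..pi}" for t
      unfolding h_def using g(2)[OF that] by simp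
    ultimately have "0 \<le> integral {0..pi} h" "h integrable_on {0..pi}"
      by (auto intro: integral_nonneg integrable_continuous_real)
    moreover have "integral {0..pi} h \<noteq> 0"
    proof
      assume "integral {0..pi} h = 0"
      with \<open>h integrable_on {0..pi}\<close> have "(h has_integral 0) (cbox 0 pi)"
        by (metis cbox_interval integrable_integral)
      moreover have "box 0 pi \<noteq> {}"
        using pi_gt_zero by (simp add: box_real not_le)
      ultimately have h_zero: "h t = 0" if "t \<in> {0..pi}" for t
        using \<open>continuous_on {0..pi} h\<close> h_nonneg that
        by (intro has_integral_0_cbox_imp_0[of 0 pi h]) auto
      have "poly f x = 0" if "x \<in> {-1<..<1}" for x
      proof -
        have "arccos x \<in> {0<..<pi}" "cos (arccos x) = x"
          using that arccos_lt_bounded[of x] by auto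
        with h_zero[of "arccos x"] g(3)[of "arccos x"] show ?thesis
          unfolding h_def by auto
      qed
      then have "{-1<..<1::real} \<subseteq> {x. poly f x = 0}"
        by auto
      then have "finite {-1<..<1::real}"
        using poly_roots_finite[OF \<open>f \<noteq> 0\<close>] by (rule finite_subset)
      then show False
        using infinite_Ioo[of "-1::real" 1] by simp
    qed
    ultimately show "0 < theta_integral g (f * f)"
      unfolding theta_integral_def h_def by simp
  qed
qed

lemma definite_theta_integral_sin: "definite_functional (theta_integral sin)"
  by (rule definite_theta_integral) (auto intro!: continuous_intros sin_ge_zero sin_gt_zero)

lemma definite_theta_integral_one_plus_cos: "definite_functional (theta_integral (\<lambda>t. 1 + cos t))"
proof (rule definite_theta_integral)
  show "0 \<le> 1 + cos t" for t :: real
    using cos_ge_minus_one[of t] by linarith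
  show "0 < 1 + cos t" if "t \<in> {0<..<pi}" for t
    using that cos_monotone_0_pi[of t pi] by simp
qed (intro continuous_intros)

lemma definite_theta_integral_one_minus_cos: "definite_functional (theta_integral (\<lambda>t. 1 - cos t))"
  by (rule definite_theta_integral)
    (auto intro!: continuous_intros simp: cos_monotone_0_pi[of 0, simplified])

lemma weighted_integral_one_eq_theta_integral:
  "weighted_integral (\<lambda>_. 1) p = theta_integral sin p"
proof -
  have "((\<lambda>x. sin x *\<^sub>R poly p (- (- cos x))) has_integral
        integral {- cos 0 .. - cos pi} (\<lambda>x. poly p (- x))) {0..pi}"
  proof (rule has_integral_substitution[where c = "-1" and d = 1])
    fix x assume "x \<in> {0..pi}"
    show "((\<lambda>x. - cos x) has_field_derivative sin x) (at x within {0..pi})"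
      by (auto intro!: derivative_eq_intros)
  qed (auto intro!: continuous_intros)
  then have "theta_integral sin p = integral {-1..1} (\<lambda>x. poly p (- x))"
    unfolding theta_integral_def by (simp add: mult.commute integral_unique)
  also have "\<dots> = integral {-1..1} (poly p)"
    using has_integral_reflect_real[of "poly p" "integral {-1..1} (poly p)" 1 "-1"]
    by (simp add: integral_unique integrable_integral integrable_continuous_real continuous_intros)
  finally show ?thesis
    by (simp add: weighted_integral_one)
qed

section \<open>Chebyshev polynomials of the third and fourth kind\<close>

text \<open>
  These are orthogonal on \<open>[-1, 1]\<close> for the weights \<open>\<surd>((1 + x) / (1 - x))\<close> and
  \<open>\<surd>((1 - x) / (1 + x))\<close>, that is, for \<open>1 + cos t\<close> and \<open>1 - cos t\<close> in the angle variable.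
\<close>

fun chebyshev_V :: "nat \<Rightarrow> real poly" where
  "chebyshev_V 0 = 1"
| "chebyshev_V (Suc 0) = [:-1, 2:]"
| "chebyshev_V (Suc (Suc n)) = [:0, 2:] * chebyshev_V (Suc n) - chebyshev_V n"

fun chebyshev_W :: "nat \<Rightarrow> real poly" where
  "chebyshev_W 0 = 1"
| "chebyshev_W (Suc 0) = [:1, 2:]"
| "chebyshev_W (Suc (Suc n)) = [:0, 2:] * chebyshev_W (Suc n) - chebyshev_W n"

lemma chebyshev_V_cos: "poly (chebyshev_V n) (cos t) * cos (t / 2) = cos ((real n + 1/2) * t)"
proof (induction n rule: chebyshev_V.induct)
  case 2
  have "poly (chebyshev_V (Suc 0)) (cos t) * cos (t / 2) = (2 * cos (2 * (t / 2)) - 1) * cos (t / 2)"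
    by simp
  also have "\<dots> = cos (3 * (t / 2))"
    unfolding cos_double_cos cos_treble_cos by (simp add: algebra_simps power3_eq_cube power2_eq_square)
  finally show ?case
    by (simp add: algebra_simps)
next
  case (3 n)
  define x where "x = (real (Suc n) + 1/2) * t"
  have "poly (chebyshev_V (Suc (Suc n))) (cos t) * cos (t / 2) = 2 * cos t * cos x - cos (x - t)"
    using 3 unfolding x_def by (simp add: algebra_simps)
  also have "\<dots> = cos (x + t)"
    by (simp add: cos_add cos_diff)
  finally show ?case
    unfolding x_def by (simp add: algebra_simps)
qed (simp add: mult.commute)

lemma chebyshev_W_sin: "poly (chebyshev_W n) (cos t) * sin (t / 2) = sin ((real n + 1/2) * t)"
proof (induction n rule: chebyshev_W.induct)
  case 2
  define a where "a = t / 2"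
  have t: "t = 2 * a"
    unfolding a_def by simp
  have "cos a * cos a = 1 - sin a * sin a"
    using sin_cos_squared_add[of a] by (simp add: power2_eq_square)
  then have "poly (chebyshev_W (Suc 0)) (cos t) * sin (t / 2) = sin (2 * a + a)"
    unfolding t sin_add sin_double cos_double_sin by (simp add: power2_eq_square) algebra
  then show ?case
    unfolding t by (simp add: algebra_simps)
next
  case (3 n)
  define x where "x = (real (Suc n) + 1/2) * t"
  have "poly (chebyshev_W (Suc (Suc n))) (cos t) * sin (t / 2) = 2 * cos t * sin x - sin (x - t)"
    using 3 unfolding x_def by (simp add: algebra_simps)
  also have "\<dots> = sin (x + t)"
    by (simp add: sin_add sin_diff)
  finally show ?case
    unfolding x_def by (simp add: algebra_simps)
qed (simp add: mult.commute)

lemma three_term_recurrence_degree: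
  fixes P :: "nat \<Rightarrow> real poly"
  assumes "degree (P n) = n" "degree (P (Suc n)) = Suc n" "coeff (P (Suc n)) (Suc n) = 2 ^ Suc n"
  shows "degree ([:0, 2:] * P (Suc n) - P n) = Suc (Suc n)"
    and "coeff ([:0, 2:] * P (Suc n) - P n) (Suc (Suc n)) = 2 ^ Suc (Suc n)"
proof -
  have shift: "[:0, 2:] * P (Suc n) = pCons 0 (smult 2 (P (Suc n)))"
    by (simp add: mult_pCons_left)
  have "P (Suc n) \<noteq> 0"
    using assms(3) by auto
  then have "degree ([:0, 2:] * P (Suc n)) = Suc (Suc n)"
    unfolding shift using assms(2) by (simp add: degree_pCons_eq)
  then show "degree ([:0, 2:] * P (Suc n) - P n) = Suc (Suc n)"
    using degree_add_eq_left[of "- P n" "[:0, 2:] * P (Suc n)"] assms(1) by simp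
  show "coeff ([:0, 2:] * P (Suc n) - P n) (Suc (Suc n)) = 2 ^ Suc (Suc n)"
    unfolding shift using assms by (simp add: coeff_eq_0)
qed

lemma chebyshev_V_degree: "degree (chebyshev_V n) = n \<and> coeff (chebyshev_V n) n = 2 ^ n"
proof (induction n rule: chebyshev_V.induct)
  case (3 n)
  then show ?case
    by (simp only: chebyshev_V.simps(3) three_term_recurrence_degree)
qed simp_all

lemma chebyshev_W_degree: "degree (chebyshev_W n) = n \<and> coeff (chebyshev_W n) n = 2 ^ n"
proof (induction n rule: chebyshev_W.induct)
  case (3 n)
  then show ?case
    by (simp only: chebyshev_W.simps(3) three_term_recurrence_degree)
qed simp_all

lemma chebyshev_V_nonzero: "chebyshev_V n \<noteq> 0"
  using chebyshev_V_degree[of n] by (metis leading_coeff_0_iff power_not_zero zero_neq_numeral)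

lemma chebyshev_W_nonzero: "chebyshev_W n \<noteq> 0"
  using chebyshev_W_degree[of n] by (metis leading_coeff_0_iff power_not_zero zero_neq_numeral)

lemma integral_cos_multiple:
  assumes "1 \<le> j"
  shows "((\<lambda>t. cos (real j * t)) has_integral 0) {0..pi}"
proof -
  have "((\<lambda>t. cos (real j * t)) has_integral sin (real j * pi) / real j - sin (real j * 0) / real j) {0..pi}"
  proof (rule fundamental_theorem_of_calculus)
    fix x assume "x \<in> {0..pi}"
    have "((\<lambda>t. sin (real j * t) / real j) has_real_derivative cos (real j * x) * real j / real j) (at x)"
      by (auto intro!: derivative_eq_intros)
    then show "((\<lambda>t. sin (real j * t) / real j) has_vector_derivative cos (real j * x)) (at x within {0..pi})"
      using assms by (simp add: has_real_derivative_iff_has_vector_derivative[symmetric] has_field_derivative_at_within)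
  qed simp
  then show ?thesis
    by simp
qed

lemma chebyshev_V_orthogonal:
  "orthogonal_wrt (theta_integral (\<lambda>t. 1 + cos t)) n (chebyshev_V n)"
proof -
  interpret poly_functional "theta_integral (\<lambda>t. 1 + cos t)"
    by (intro poly_functional_theta_integral continuous_intros)
  have "theta_integral (\<lambda>t. 1 + cos t) (chebyshev_V n * chebyshev_V k) = 0" if "k < n" for k
  proof -
    have "poly (chebyshev_V n * chebyshev_V k) (cos t) * (1 + cos t)
          = cos (real (n - k) * t) + cos (real (n + k + 1) * t)" for t
    proof -
      have "poly (chebyshev_V n * chebyshev_V k) (cos t) * (1 + cos t)
          = 2 * (poly (chebyshev_V n) (cos t) * cos (t / 2)) * (poly (chebyshev_V k) (cos t) * cos (t / 2))"
        using cos_double_cos[of "t / 2"] by (simp add: algebra_simps power2_eq_square)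
      also have "\<dots> = 2 * cos ((real n + 1/2) * t) * cos ((real k + 1/2) * t)"
        by (simp only: chebyshev_V_cos)
      also have "\<dots> = cos ((real n + 1/2) * t - (real k + 1/2) * t) + cos ((real n + 1/2) * t + (real k + 1/2) * t)"
        by (simp add: cos_add cos_diff)
      also have "\<dots> = cos (real (n - k) * t) + cos (real (n + k + 1) * t)"
        using that by (simp add: of_nat_diff algebra_simps)
      finally show ?thesis .
    qed
    moreover have "((\<lambda>t. cos (real (n - k) * t) + cos (real (n + k + 1) * t)) has_integral 0 + 0) {0..pi}"
      using that by (intro has_integral_add integral_cos_multiple) auto
    ultimately show ?thesis
      unfolding theta_integral_def by (simp add: integral_unique)
  qed
  then show ?thesis
    using chebyshev_V_degree chebyshev_V_nonzero by (intro orthogonal_wrtI_basis) auto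
qed

lemma chebyshev_W_orthogonal:
  "orthogonal_wrt (theta_integral (\<lambda>t. 1 - cos t)) n (chebyshev_W n)"
proof -
  interpret poly_functional "theta_integral (\<lambda>t. 1 - cos t)"
    by (intro poly_functional_theta_integral continuous_intros)
  have "theta_integral (\<lambda>t. 1 - cos t) (chebyshev_W n * chebyshev_W k) = 0" if "k < n" for k
  proof -
    have "poly (chebyshev_W n * chebyshev_W k) (cos t) * (1 - cos t)
          = cos (real (n - k) * t) - cos (real (n + k + 1) * t)" for t
    proof -
      have "poly (chebyshev_W n * chebyshev_W k) (cos t) * (1 - cos t)
          = 2 * (poly (chebyshev_W n) (cos t) * sin (t / 2)) * (poly (chebyshev_W k) (cos t) * sin (t / 2))"
      proof -
        have half: "1 - cos t = 2 * sin (t / 2) * sin (t / 2)"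
          using cos_double_sin[of "t / 2"] by (simp add: power2_eq_square)
        show ?thesis
          unfolding half by (simp add: algebra_simps)
      qed
      also have "\<dots> = 2 * sin ((real n + 1/2) * t) * sin ((real k + 1/2) * t)"
        by (simp only: chebyshev_W_sin)
      also have "\<dots> = cos ((real n + 1/2) * t - (real k + 1/2) * t) - cos ((real n + 1/2) * t + (real k + 1/2) * t)"
        by (simp add: cos_add cos_diff)
      also have "\<dots> = cos (real (n - k) * t) - cos (real (n + k + 1) * t)"
        using that by (simp add: of_nat_diff algebra_simps)
      finally show ?thesis .
    qed
    moreover have "((\<lambda>t. cos (real (n - k) * t) - cos (real (n + k + 1) * t)) has_integral 0 - 0) {0..pi}"
      using that by (intro has_integral_diff integral_cos_multiple) auto
    ultimately show ?thesis
      unfolding theta_integral_def by (simp add: integral_unique)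
  qed
  then show ?thesis
    using chebyshev_W_degree chebyshev_W_nonzero by (intro orthogonal_wrtI_basis) auto
qed

lemma nth_zero_eq_if_increasing_roots:
  fixes p :: "real poly" and z :: "nat \<Rightarrow> real"
  assumes "p \<noteq> 0" "degree p = n" and mono: "\<And>a b. a < b \<Longrightarrow> b < n \<Longrightarrow> z a < z b"
    and root: "\<And>k. k < n \<Longrightarrow> poly p (z k) = 0"
  shows "card {x. poly p x = 0} = n" "\<And>i. 1 \<le> i \<Longrightarrow> i \<le> n \<Longrightarrow> nth_zero p i = z (i - 1)"
proof -
  define R where "R = {x. poly p x = 0}"
  have "finite R"
    unfolding R_def using assms(1) by (rule poly_roots_finite)
  have "strict_mono_on {..<n} z"
    using mono by (auto intro: strict_mono_onI)
  then have "inj_on z {..<n}"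
    by (rule strict_mono_on_imp_inj_on)
  then have "card (z ` {..<n}) = n"
    by (simp add: card_image)
  have "z ` {..<n} \<subseteq> R"
    unfolding R_def using root by auto
  moreover have "card R \<le> n"
    unfolding R_def using card_poly_roots_bound[OF assms(1)] assms(2) by simp
  moreover have "n \<le> card R"
    using card_mono[OF \<open>finite R\<close> \<open>z ` {..<n} \<subseteq> R\<close>] \<open>card (z ` {..<n}) = n\<close> by simp
  ultimately have R: "z ` {..<n} = R"
    using \<open>finite R\<close> \<open>card (z ` {..<n}) = n\<close> by (intro card_subset_eq) auto
  then show "card {x. poly p x = 0} = n"
    using \<open>card (z ` {..<n}) = n\<close> unfolding R_def by simp
  have "sorted_wrt (<) (map z [0..<n])"
    unfolding sorted_wrt_iff_nth_less using mono by auto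
  moreover have "set (map z [0..<n]) = R" "length (map z [0..<n]) = card R"
    using R \<open>card (z ` {..<n}) = n\<close> by auto
  ultimately have "sorted_list_of_set R = map z [0..<n]"
    using sorted_list_of_set_unique[of R "map z [0..<n]"] \<open>finite R\<close> by auto
  then show "nth_zero p i = z (i - 1)" if "1 \<le> i" "i \<le> n" for i
    unfolding nth_zero_def R_def[symmetric] using that by simp
qed

lemma angle_fraction_bounds:
  fixes a b :: real
  assumes "0 < a" "a < b"
  shows "0 < a * pi / b" "a * pi / b < pi"
proof -
  have "0 < a / b" "a / b < 1"
    using assms by simp_all
  then have "0 < pi * (a / b)" "pi * (a / b) < pi * 1"
    by (simp_all only: mult_pos_pos[OF pi_gt_zero] mult_strict_left_mono[OF _ pi_gt_zero])
  then show "0 < a * pi / b" "a * pi / b < pi"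
    by (simp_all add: ac_simps)
qed

lemma chebyshev_V_zeros:
  shows "card {x. poly (chebyshev_V n) x = 0} = n"
    and "1 \<le> i \<Longrightarrow> i \<le> n \<Longrightarrow>
      nth_zero (chebyshev_V n) i = cos ((2 * real (n + 1 - i) - 1) * pi / (2 * real n + 1))"
proof -
  define \<theta> where "\<theta> k = (2 * (real n - real k) - 1) * pi / (2 * real n + 1)" for k
  have \<theta>_bounds: "0 < \<theta> k" "\<theta> k < pi" if "k < n" for k
    unfolding \<theta>_def using that by (auto intro!: angle_fraction_bounds)
  have mono: "cos (\<theta> a) < cos (\<theta> b)" if "a < b" "b < n" for a b
  proof (rule cos_monotone_0_pi)
    show "\<theta> b < \<theta> a"
      unfolding \<theta>_def using that by (simp add: divide_strict_right_mono)
  qed (use that \<theta>_bounds[of a] \<theta>_bounds[of b] in auto)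
  have root: "poly (chebyshev_V n) (cos (\<theta> k)) = 0" if "k < n" for k
  proof -
    have "(real n + 1/2) * \<theta> k = real (n - k) * pi - pi / 2"
      unfolding \<theta>_def using that by (simp add: of_nat_diff field_simps)
    then have "poly (chebyshev_V n) (cos (\<theta> k)) * cos (\<theta> k / 2) = 0"
      unfolding chebyshev_V_cos by (simp add: cos_diff)
    moreover have "0 < cos (\<theta> k / 2)"
      using \<theta>_bounds[OF that] by (intro cos_gt_zero_pi) auto
    ultimately show ?thesis
      by simp
  qed
  note zeros = nth_zero_eq_if_increasing_roots[of "chebyshev_V n" n "\<lambda>k. cos (\<theta> k)",
      OF chebyshev_V_nonzero chebyshev_V_degree[THEN conjunct1] mono root]
  show "card {x. poly (chebyshev_V n) x = 0} = n"
    by (rule zeros(1))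
  show "nth_zero (chebyshev_V n) i = cos ((2 * real (n + 1 - i) - 1) * pi / (2 * real n + 1))"
    if "1 \<le> i" "i \<le> n"
    using zeros(2)[of i] that by (simp add: \<theta>_def of_nat_diff)
qed

lemma chebyshev_W_zeros:
  shows "card {x. poly (chebyshev_W n) x = 0} = n"
    and "1 \<le> i \<Longrightarrow> i \<le> n \<Longrightarrow>
      nth_zero (chebyshev_W n) i = cos (2 * real (n + 1 - i) * pi / (2 * real n + 1))"
proof -
  define \<theta> where "\<theta> k = 2 * (real n - real k) * pi / (2 * real n + 1)" for k
  have \<theta>_bounds: "0 < \<theta> k" "\<theta> k < pi" if "k < n" for k
    unfolding \<theta>_def using that by (auto intro!: angle_fraction_bounds)
  have mono: "cos (\<theta> a) < cos (\<theta> b)" if "a < b" "b < n" for a b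
  proof (rule cos_monotone_0_pi)
    show "\<theta> b < \<theta> a"
      unfolding \<theta>_def using that by (simp add: divide_strict_right_mono)
  qed (use that \<theta>_bounds[of a] \<theta>_bounds[of b] in auto)
  have root: "poly (chebyshev_W n) (cos (\<theta> k)) = 0" if "k < n" for k
  proof -
    have "(real n + 1/2) * \<theta> k = real (n - k) * pi"
      unfolding \<theta>_def using that by (simp add: of_nat_diff field_simps)
    then have "poly (chebyshev_W n) (cos (\<theta> k)) * sin (\<theta> k / 2) = 0"
      unfolding chebyshev_W_sin by simp
    moreover have "0 < sin (\<theta> k / 2)"
      using \<theta>_bounds[OF that] by (intro sin_gt_zero) auto
    ultimately show ?thesis
      by simp
  qed
  note zeros = nth_zero_eq_if_increasing_roots[of "chebyshev_W n" n "\<lambda>k. cos (\<theta> k)",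
      OF chebyshev_W_nonzero chebyshev_W_degree[THEN conjunct1] mono root]
  show "card {x. poly (chebyshev_W n) x = 0} = n"
    by (rule zeros(1))
  show "nth_zero (chebyshev_W n) i = cos (2 * real (n + 1 - i) * pi / (2 * real n + 1))"
    if "1 \<le> i" "i \<le> n"
    using zeros(2)[of i] that by (simp add: \<theta>_def of_nat_diff algebra_simps)
qed

section \<open>The Legendre zeros\<close>

text \<open>Integrating \<open>(a - \<alpha>) (d\<^sub>1 - \<beta> d\<^sub>2) \<ge> 0\<close> eliminates \<open>\<alpha>\<close> because \<open>\<beta> \<integral>d\<^sub>2 = \<integral>d\<^sub>1\<close>.\<close>

lemma integral_ratio_le_if_sign_condition:
  fixes a d1 d2 :: "real \<Rightarrow> real"
  assumes cont: "continuous_on {l..u} a" "continuous_on {l..u} d1" "continuous_on {l..u} d2"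
    and pos: "0 < integral {l..u} d2" and \<beta>: "\<beta> * integral {l..u} d2 = integral {l..u} d1"
    and sign: "\<And>t. t \<in> {l..u} \<Longrightarrow> 0 \<le> (a t - \<alpha>) * (d1 t - \<beta> * d2 t)"
  shows "integral {l..u} (\<lambda>t. a t * d2 t) * integral {l..u} d1
          \<le> integral {l..u} (\<lambda>t. a t * d1 t) * integral {l..u} d2"
proof -
  define A where "A = integral {l..u} (\<lambda>t. a t * d1 t)"
  define B where "B = integral {l..u} d1"
  define C where "C = integral {l..u} (\<lambda>t. a t * d2 t)"
  define D where "D = integral {l..u} d2"
  have "(\<lambda>t. a t * d1 t) integrable_on {l..u}" "d1 integrable_on {l..u}"
    "(\<lambda>t. a t * d2 t) integrable_on {l..u}" "d2 integrable_on {l..u}"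
    using cont by (simp_all add: integrable_continuous_real continuous_on_mult)
  then have "((\<lambda>t. a t * d1 t) has_integral A) {l..u}" "(d1 has_integral B) {l..u}"
    "((\<lambda>t. a t * d2 t) has_integral C) {l..u}" "(d2 has_integral D) {l..u}"
    unfolding A_def B_def C_def D_def by (simp_all add: integrable_integral)
  then have "((\<lambda>t. (a t * d1 t - \<beta> * (a t * d2 t)) - (\<alpha> * d1 t - (\<alpha> * \<beta>) * d2 t)) has_integral
           (A - \<beta> * C) - (\<alpha> * B - (\<alpha> * \<beta>) * D)) {l..u}"
    by (intro has_integral_diff has_integral_mult_right)
  then have "((\<lambda>t. (a t - \<alpha>) * (d1 t - \<beta> * d2 t)) has_integral
           (A - \<beta> * C) - (\<alpha> * B - (\<alpha> * \<beta>) * D)) {l..u}"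
    by (simp add: algebra_simps)
  then have "0 \<le> (A - \<beta> * C) - (\<alpha> * B - (\<alpha> * \<beta>) * D)"
    by (rule has_integral_nonneg) (rule sign)
  moreover have "\<beta> * D = B"
    using \<beta> unfolding B_def D_def .
  then have "\<alpha> * B = (\<alpha> * \<beta>) * D"
    by (simp add: mult.assoc)
  ultimately have "\<beta> * C \<le> A"
    by linarith
  have "C * B = \<beta> * C * D"
    using \<open>\<beta> * D = B\<close> by (metis mult.assoc mult.commute)
  also have "\<dots> \<le> A * D"
    using \<open>\<beta> * C \<le> A\<close> pos unfolding D_def by (simp add: mult_right_mono)
  finally show ?thesis
    unfolding A_def B_def C_def D_def .
qed

lemma tan_half_sign_condition:
  fixes t h b :: real
  assumes "t \<in> {0..pi}" "0 \<le> h" "0 \<le> b"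
  shows "0 \<le> (1 - cos t - 2 * b\<^sup>2 / (1 + b\<^sup>2)) * (2 * sin (t / 2) * h - b * (2 * cos (t / 2) * h))"
proof -
  define s c where "s = sin (t / 2)" and "c = cos (t / 2)"
  have "0 \<le> s" "0 \<le> c" "s\<^sup>2 + c\<^sup>2 = 1"
    unfolding s_def c_def using assms(1) by (auto intro!: sin_ge_zero cos_ge_zero)
  have "0 < 1 + b\<^sup>2"
    by (simp add: add_pos_nonneg)
  have half: "1 - cos t = 2 * s\<^sup>2"
    unfolding s_def using cos_double_sin[of "t / 2"] by simp
  have "s\<^sup>2 * (1 + b\<^sup>2) - b\<^sup>2 = (s - b * c) * (s + b * c)"
    using \<open>s\<^sup>2 + c\<^sup>2 = 1\<close> by (simp add: algebra_simps power2_eq_square) algebra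
  then have e1: "2 * s\<^sup>2 - 2 * b\<^sup>2 / (1 + b\<^sup>2) = 2 * (s - b * c) * (s + b * c) / (1 + b\<^sup>2)"
    using \<open>0 < 1 + b\<^sup>2\<close> by (simp add: field_simps)
  have e2: "2 * s * h - b * (2 * c * h) = 2 * h * (s - b * c)"
    by (simp add: algebra_simps)
  have e3: "2 * (s - b * c) * (s + b * c) / (1 + b\<^sup>2) * (2 * h * (s - b * c))
      = 4 * h * (s + b * c) / (1 + b\<^sup>2) * (s - b * c)\<^sup>2"
    by (simp add: power2_eq_square algebra_simps)
  show ?thesis
    unfolding half s_def[symmetric] c_def[symmetric] e1 e2 e3
    using assms \<open>0 \<le> s\<close> \<open>0 \<le> c\<close> \<open>0 < 1 + b\<^sup>2\<close>
    by (intro mult_nonneg_nonneg divide_nonneg_pos) auto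
qed

text \<open>
  In the applications \<open>g\<^sub>1 / g\<^sub>2 = tan (t/2)\<close> increases together with \<open>1 - cos t = 2 sin\<^sup>2 (t/2)\<close>;
  the threshold \<open>\<alpha>\<close> is the value of \<open>1 - cos t\<close> where \<open>tan (t/2) = \<beta>\<close>.
\<close>

lemma theta_integral_tan_half_comparison:
  fixes g1 g2 h :: "real \<Rightarrow> real"
  assumes cont: "continuous_on {0..pi} g1" "continuous_on {0..pi} g2"
    and h: "\<And>t. t \<in> {0..pi} \<Longrightarrow> 0 \<le> h t"
    and g1: "\<And>t. t \<in> {0..pi} \<Longrightarrow> g1 t = 2 * sin (t / 2) * h t"
    and g2: "\<And>t. t \<in> {0..pi} \<Longrightarrow> g2 t = 2 * cos (t / 2) * h t"
    and pos: "0 < theta_integral g2 (q * q)"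
  shows "theta_integral g2 ([:1, -1:] * q * q) * theta_integral g1 (q * q)
          \<le> theta_integral g1 ([:1, -1:] * q * q) * theta_integral g2 (q * q)"
proof -
  define F where "F t = poly (q * q) (cos t)" for t
  define a where "a t = 1 - cos t" for t :: real
  define d1 where "d1 t = F t * g1 t" for t
  define d2 where "d2 t = F t * g2 t" for t
  have F_nonneg: "0 \<le> F t" for t
    unfolding F_def by simp
  have moment: "theta_integral g (q * q) = integral {0..pi} (\<lambda>t. F t * g t)"
    and first_moment: "theta_integral g ([:1, -1:] * q * q) = integral {0..pi} (\<lambda>t. a t * (F t * g t))"
    for g
    unfolding theta_integral_def F_def a_def by (simp_all add: algebra_simps)
  define \<beta> where "\<beta> = integral {0..pi} d1 / integral {0..pi} d2"
  have "0 < integral {0..pi} d2"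
    using pos unfolding moment d2_def .
  have "continuous_on {0..pi} d1"
    unfolding d1_def F_def by (intro continuous_intros cont(1))
  moreover have "0 \<le> d1 t" if "t \<in> {0..pi}" for t
    unfolding d1_def g1[OF that] using F_nonneg h[OF that] that
    by (intro mult_nonneg_nonneg sin_ge_zero) auto
  ultimately have "0 \<le> integral {0..pi} d1"
    by (intro integral_nonneg integrable_continuous_real)
  then have "0 \<le> \<beta>"
    unfolding \<beta>_def using \<open>0 < integral {0..pi} d2\<close> by simp
  define \<alpha> where "\<alpha> = 2 * \<beta>\<^sup>2 / (1 + \<beta>\<^sup>2)"
  have "integral {0..pi} (\<lambda>t. a t * d2 t) * integral {0..pi} d1
          \<le> integral {0..pi} (\<lambda>t. a t * d1 t) * integral {0..pi} d2"
  proof (rule integral_ratio_le_if_sign_condition[where \<beta> = \<beta> and \<alpha> = \<alpha>])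
    show "continuous_on {0..pi} a" "continuous_on {0..pi} d2"
      unfolding a_def d2_def F_def by (intro continuous_intros cont(2))+
    show "\<beta> * integral {0..pi} d2 = integral {0..pi} d1"
      unfolding \<beta>_def using \<open>0 < integral {0..pi} d2\<close> by simp
  next
    fix t :: real
    assume t: "t \<in> {0..pi}"
    have "d1 t - \<beta> * d2 t = F t * (2 * sin (t / 2) * h t - \<beta> * (2 * cos (t / 2) * h t))"
      unfolding d1_def d2_def g1[OF t] g2[OF t] by (simp add: algebra_simps)
    then have "(a t - \<alpha>) * (d1 t - \<beta> * d2 t)
        = F t * ((1 - cos t - \<alpha>) * (2 * sin (t / 2) * h t - \<beta> * (2 * cos (t / 2) * h t)))"
      unfolding a_def by (simp only: ac_simps)
    also have "0 \<le> \<dots>"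
      unfolding \<alpha>_def
      by (rule mult_nonneg_nonneg[OF F_nonneg tan_half_sign_condition[OF t h[OF t] \<open>0 \<le> \<beta>\<close>]])
    finally show "0 \<le> (a t - \<alpha>) * (d1 t - \<beta> * d2 t)" .
  qed fact+
  then show ?thesis
    unfolding moment first_moment d1_def d2_def .
qed

lemma legendre_zero_between_chebyshev_zeros:
  assumes i: "1 \<le> i" "i \<le> n"
  shows "nth_zero (chebyshev_W n) i \<le> xi (\<lambda>_. 1) n i"
    and "xi (\<lambda>_. 1) n i \<le> nth_zero (chebyshev_V n) i"
proof -
  note U = bounded_weight_gram_schmidt[OF bounded_weight_one]
  have Lu: "weighted_integral (\<lambda>_. 1) = theta_integral sin"
    using weighted_integral_one_eq_theta_integral by blast
  have sin_half: "sin t = 2 * sin (t / 2) * cos (t / 2)" "sin t = 2 * cos (t / 2) * sin (t / 2)"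
    and one_plus_cos: "1 + cos t = 2 * cos (t / 2) * cos (t / 2)"
    and one_minus_cos: "1 - cos t = 2 * sin (t / 2) * sin (t / 2)" for t :: real
    using sin_double[of "t / 2"] cos_double_cos[of "t / 2"] cos_double_sin[of "t / 2"]
    by (simp_all add: power2_eq_square)
  have "1 * (1 - nth_zero (chebyshev_V n) i) \<le> 1 - xi (\<lambda>_. 1) n i"
    unfolding U(4)
  proof (rule compare_zeros_one_minus[OF U(1-3) definite_theta_integral_one_plus_cos
        chebyshev_V_orthogonal chebyshev_V_zeros(1) i])
    fix q :: "real poly"
    assume "q \<noteq> 0"
    show "1 * theta_integral (\<lambda>t. 1 + cos t) ([:1, -1:] * q * q) * weighted_integral (\<lambda>_. 1) (q * q)
        \<le> weighted_integral (\<lambda>_. 1) ([:1, -1:] * q * q) * theta_integral (\<lambda>t. 1 + cos t) (q * q)"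
      unfolding Lu mult.left_neutral
    proof (rule theta_integral_tan_half_comparison[where h = "\<lambda>t. cos (t / 2)"])
      show "0 < theta_integral (\<lambda>t. 1 + cos t) (q * q)"
        using definite_functional.square_pos[OF definite_theta_integral_one_plus_cos \<open>q \<noteq> 0\<close>] .
    qed (auto intro!: continuous_intros cos_ge_zero intro: sin_half one_plus_cos)
  qed simp
  then show "xi (\<lambda>_. 1) n i \<le> nth_zero (chebyshev_V n) i"
    by simp
  have "1 * (1 - xi (\<lambda>_. 1) n i) \<le> 1 - nth_zero (chebyshev_W n) i"
    unfolding U(4)
  proof (rule compare_zeros_one_minus[OF definite_theta_integral_one_minus_cos
        chebyshev_W_orthogonal chebyshev_W_zeros(1) U(1-3) i])
    fix q :: "real poly"
    assume "q \<noteq> 0"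
    show "1 * weighted_integral (\<lambda>_. 1) ([:1, -1:] * q * q) * theta_integral (\<lambda>t. 1 - cos t) (q * q)
        \<le> theta_integral (\<lambda>t. 1 - cos t) ([:1, -1:] * q * q) * weighted_integral (\<lambda>_. 1) (q * q)"
      unfolding Lu mult.left_neutral
    proof (rule theta_integral_tan_half_comparison[where h = "\<lambda>t. sin (t / 2)"])
      show "0 < theta_integral sin (q * q)"
        using definite_functional.square_pos[OF definite_theta_integral_sin \<open>q \<noteq> 0\<close>] .
    qed (auto intro!: continuous_intros sin_ge_zero intro: sin_half one_minus_cos)
  qed simp
  then show "nth_zero (chebyshev_W n) i \<le> xi (\<lambda>_. 1) n i"
    by simp
qed

lemma one_minus_cos_le_square:
  fixes x :: real
  shows "1 - cos x \<le> x\<^sup>2 / 2"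
proof -
  have "1 - cos x = 2 * (sin (x / 2))\<^sup>2"
    using cos_double_sin[of "x / 2"] by simp
  also have "(sin (x / 2))\<^sup>2 \<le> (x / 2)\<^sup>2"
    using power_mono[OF abs_sin_x_le_abs_x[of "x / 2"] abs_ge_zero, of 2] by (simp add: power_divide)
  finally show ?thesis
    by (simp add: power2_eq_square)
qed

lemma sin_ge_cubic_approx:
  fixes y :: real
  assumes "0 \<le> y"
  shows "y - y ^ 3 / 6 \<le> sin y"
proof -
  define g where "g y = sin y - y + y ^ 3 / 6" for y :: real
  have "g 0 \<le> g y"
  proof (rule deriv_nonneg_imp_mono[where g = g and g' = "\<lambda>y. cos y - 1 + y\<^sup>2 / 2"])
    fix x :: real
    show "(g has_real_derivative cos x - 1 + x\<^sup>2 / 2) (at x)"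
      unfolding g_def by (auto intro!: derivative_eq_intros simp: power2_eq_square power3_eq_cube)
    show "0 \<le> cos x - 1 + x\<^sup>2 / 2"
      using one_minus_cos_le_square[of x] by simp
  qed (use assms in simp)
  then show ?thesis
    unfolding g_def by simp
qed

lemma one_minus_cos_ge_square:
  fixes x :: real
  assumes "0 \<le> x" "x \<le> pi"
  shows "x\<^sup>2 / 18 \<le> 1 - cos x"
proof -
  define y where "y = x / 2"
  have y: "0 \<le> y" "y \<le> 2"
    using assms pi_less_4 unfolding y_def by auto
  then have "y * y\<^sup>2 \<le> y * 4"
    using mult_mono[OF y(2) y(2)] by (intro mult_left_mono) (simp_all add: power2_eq_square)
  then have "y / 3 \<le> y - y ^ 3 / 6"
    by (simp add: power3_eq_cube power2_eq_square)
  also have "\<dots> \<le> sin y"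
    by (rule sin_ge_cubic_approx[OF y(1)])
  finally have "(y / 3)\<^sup>2 \<le> (sin y)\<^sup>2"
    using y by (intro power_mono) auto
  moreover have "1 - cos x = 2 * (sin y)\<^sup>2"
    using cos_double_sin[of y] unfolding y_def by simp
  ultimately show ?thesis
    unfolding y_def by (simp add: power2_eq_square)
qed

lemma one_minus_cos_odd_angle_ge:
  assumes "1 \<le> j" "j \<le> n"
  shows "(real j / real n)\<^sup>2 / 18 \<le> 1 - cos ((2 * real j - 1) * pi / (2 * real n + 1))"
proof -
  define x where "x = (2 * real j - 1) * pi / (2 * real n + 1)"
  have "0 \<le> x"
    unfolding x_def using assms by simp
  have "(2 * real j - 1) / (2 * real n + 1) \<le> 1"
    using assms by simp
  then have "pi * ((2 * real j - 1) / (2 * real n + 1)) \<le> pi * 1"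
    using pi_gt_zero by (intro mult_left_mono) auto
  then have "x \<le> pi"
    unfolding x_def by (simp add: mult.commute)
  have "real j * 1 \<le> real j * real n" "1 * real n \<le> real j * real n"
    using assms by (intro mult_left_mono mult_right_mono; simp)+
  then have "real j + 3 * real n \<le> 4 * real j * real n"
    by simp
  then have "real j / real n \<le> 3 * ((2 * real j - 1) / (2 * real n + 1))"
    using assms by (simp add: field_simps)
  also have "\<dots> \<le> pi * ((2 * real j - 1) / (2 * real n + 1))"
    using pi_gt3 assms by (intro mult_right_mono) auto
  also have "\<dots> = x"
    unfolding x_def by simp
  finally have "(real j / real n)\<^sup>2 / 18 \<le> x\<^sup>2 / 18"
    by (simp add: power_mono)
  also have "\<dots> \<le> 1 - cos x"
    by (rule one_minus_cos_ge_square[OF \<open>0 \<le> x\<close> \<open>x \<le> pi\<close>])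
  finally show ?thesis
    unfolding x_def .
qed

lemma one_minus_cos_even_angle_le:
  assumes "1 \<le> n"
  shows "1 - cos (2 * real j * pi / (2 * real n + 1)) \<le> 8 * (real j / real n)\<^sup>2"
proof -
  define x where "x = 2 * real j * pi / (2 * real n + 1)"
  have "0 \<le> x"
    unfolding x_def by simp
  have "x \<le> 2 * real j * pi / (2 * real n)"
    unfolding x_def using assms by (intro divide_left_mono) auto
  also have "\<dots> = pi * (real j / real n)"
    by simp
  also have "\<dots> \<le> 4 * (real j / real n)"
    using pi_less_4 by (intro mult_right_mono) auto
  finally have "x\<^sup>2 \<le> (4 * (real j / real n))\<^sup>2"
    using \<open>0 \<le> x\<close> by (intro power_mono) auto
  then have "x\<^sup>2 / 2 \<le> 8 * (real j / real n)\<^sup>2"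
    by (simp add: power2_eq_square)
  with one_minus_cos_le_square[of x] show ?thesis
    unfolding x_def by simp
qed

lemma legendre_zero_gap_bounds:
  assumes i: "1 \<le> i" "i \<le> n"
  defines "k \<equiv> n + 1 - i"
  shows "(real k / real n)\<^sup>2 / 18 \<le> 1 - xi (\<lambda>_. 1) n i"
    and "1 - xi (\<lambda>_. 1) n i \<le> 8 * (real k / real n)\<^sup>2"
    and "(real i / real n)\<^sup>2 / 18 \<le> 1 + xi (\<lambda>_. 1) n i"
    and "1 + xi (\<lambda>_. 1) n i \<le> 8 * (real i / real n)\<^sup>2"
proof -
  have k: "1 \<le> k" "k \<le> n" "real k = real n + 1 - real i"
    unfolding k_def using i by (auto simp: of_nat_diff)
  define x1 where "x1 = (2 * real k - 1) * pi / (2 * real n + 1)"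
  define x2 where "x2 = 2 * real k * pi / (2 * real n + 1)"
  have "cos x2 \<le> xi (\<lambda>_. 1) n i" "xi (\<lambda>_. 1) n i \<le> cos x1"
    using legendre_zero_between_chebyshev_zeros[OF i] chebyshev_V_zeros(2)[OF i]
      chebyshev_W_zeros(2)[OF i]
    unfolding x1_def x2_def k_def by simp_all
  moreover have "cos x1 = - cos (2 * real i * pi / (2 * real n + 1))"
    and "cos x2 = - cos ((2 * real i - 1) * pi / (2 * real n + 1))"
    unfolding x1_def x2_def k(3) by (simp_all add: field_simps flip: cos_pi_minus)
  ultimately show "(real k / real n)\<^sup>2 / 18 \<le> 1 - xi (\<lambda>_. 1) n i"
    and "1 - xi (\<lambda>_. 1) n i \<le> 8 * (real k / real n)\<^sup>2"
    and "(real i / real n)\<^sup>2 / 18 \<le> 1 + xi (\<lambda>_. 1) n i"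
    and "1 + xi (\<lambda>_. 1) n i \<le> 8 * (real i / real n)\<^sup>2"
    using one_minus_cos_odd_angle_ge[OF k(1,2)] one_minus_cos_even_angle_le[of n k]
      one_minus_cos_odd_angle_ge[OF i] one_minus_cos_even_angle_le[of n i] i
    unfolding x1_def x2_def by simp_all
qed

section \<open>The square-root estimates\<close>

lemma sqrt_lower_bound_from_scaled:
  fixes m M X Y r :: real
  assumes "0 < m" "m \<le> M" "m / M * Y \<le> X" "r\<^sup>2 / 18 \<le> Y" "0 \<le> r"
  shows "1/5 * sqrt (m / M) * r \<le> sqrt X"
proof (rule real_le_rsqrt)
  have "0 \<le> m / M"
    using assms by simp
  then have "(1/5 * sqrt (m / M) * r)\<^sup>2 = m / M * (r\<^sup>2 / 25)"
    by (simp add: power_mult_distrib power_divide)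
  also have "\<dots> \<le> m / M * Y"
    using \<open>0 \<le> m / M\<close> assms(4) zero_le_power2[of r]
    by (intro mult_left_mono) linarith+
  also have "\<dots> \<le> X"
    by fact
  finally show "(1/5 * sqrt (m / M) * r)\<^sup>2 \<le> X" .
qed

lemma sqrt_upper_bound_from_scaled:
  fixes m M X Y r :: real
  assumes "0 < m" "m \<le> M" "X \<le> M / m * Y" "Y \<le> 8 * r\<^sup>2" "0 \<le> r"
  shows "sqrt X \<le> 3 * sqrt (M / m) * r"
proof (rule real_le_lsqrt)
  have "0 \<le> M / m"
    using assms by simp
  then show "0 \<le> 3 * sqrt (M / m) * r"
    using assms by simp
  have "X \<le> M / m * Y"
    by fact
  also have "\<dots> \<le> M / m * (9 * r\<^sup>2)"
    using \<open>0 \<le> M / m\<close> assms(4) zero_le_power2[of r]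
    by (intro mult_left_mono) linarith+
  also have "\<dots> = (3 * sqrt (M / m) * r)\<^sup>2"
    using \<open>0 \<le> M / m\<close> by (simp add: power_mult_distrib)
  finally show "X \<le> (3 * sqrt (M / m) * r)\<^sup>2" .
qed

lemma xi_sqrt_bounds:
  assumes bw: "bounded_weight w m M" and i: "1 \<le> i" "i \<le> n"
  shows "1/5 * sqrt (m / M) * (real (n + 1 - i) / real n) \<le> sqrt (1 - xi w n i)"
    and "sqrt (1 - xi w n i) \<le> 3 * sqrt (M / m) * (real (n + 1 - i) / real n)"
    and "1/5 * sqrt (m / M) * (real i / real n) \<le> sqrt (1 + xi w n i)"
    and "sqrt (1 + xi w n i) \<le> 3 * sqrt (M / m) * (real i / real n)"
proof -
  note mM = bounded_weight_pos_le[OF bw]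
  note weight = xi_weight_comparison[OF bw i]
  note legendre = legendre_zero_gap_bounds[OF i]
  show "1/5 * sqrt (m / M) * (real (n + 1 - i) / real n) \<le> sqrt (1 - xi w n i)"
    by (rule sqrt_lower_bound_from_scaled[OF mM weight(1) legendre(1)]) simp
  show "sqrt (1 - xi w n i) \<le> 3 * sqrt (M / m) * (real (n + 1 - i) / real n)"
    by (rule sqrt_upper_bound_from_scaled[OF mM weight(2) legendre(2)]) simp
  show "1/5 * sqrt (m / M) * (real i / real n) \<le> sqrt (1 + xi w n i)"
    by (rule sqrt_lower_bound_from_scaled[OF mM weight(3) legendre(3)]) simp
  show "sqrt (1 + xi w n i) \<le> 3 * sqrt (M / m) * (real i / real n)"
    by (rule sqrt_upper_bound_from_scaled[OF mM weight(4) legendre(4)]) simp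
qed

theorem corollary3p5:
  shows "(\<forall>w m M. bounded_weight w m M \<longrightarrow>
            (\<forall>n i. 1 \<le> n \<and> 1 \<le> i \<and> i \<le> n \<longrightarrow>
               m / M * (1 - xi (\<lambda>_. 1) n i) \<le> 1 - xi w n i \<and>
               1 - xi w n i \<le> M / m * (1 - xi (\<lambda>_. 1) n i) \<and>
               m / M * (1 + xi (\<lambda>_. 1) n i) \<le> 1 + xi w n i \<and>
               1 + xi w n i \<le> M / m * (1 + xi (\<lambda>_. 1) n i)))
       \<and> (\<exists>C c::real. C > 0 \<and> c > 0 \<and>
            (\<forall>w m M. bounded_weight w m M \<longrightarrow>
              (\<forall>n i. 1 \<le> n \<and> 1 \<le> i \<and> i \<le> n \<longrightarrow>
                 c * sqrt (m / M) * (real (n + 1 - i) / real n) \<le> sqrt (1 - xi w n i) \<and>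
                 sqrt (1 - xi w n i) \<le> C * sqrt (M / m) * (real (n + 1 - i) / real n) \<and>
                 c * sqrt (m / M) * (real i / real n) \<le> sqrt (1 + xi w n i) \<and>
                 sqrt (1 + xi w n i) \<le> C * sqrt (M / m) * (real i / real n))))"
proof (intro conjI)
  show "\<forall>w m M. bounded_weight w m M \<longrightarrow>
            (\<forall>n i. 1 \<le> n \<and> 1 \<le> i \<and> i \<le> n \<longrightarrow>
               m / M * (1 - xi (\<lambda>_. 1) n i) \<le> 1 - xi w n i \<and>
               1 - xi w n i \<le> M / m * (1 - xi (\<lambda>_. 1) n i) \<and>
               m / M * (1 + xi (\<lambda>_. 1) n i) \<le> 1 + xi w n i \<and>
               1 + xi w n i \<le> M / m * (1 + xi (\<lambda>_. 1) n i))"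
    using xi_weight_comparison by blast
  show "\<exists>C c::real. C > 0 \<and> c > 0 \<and>
            (\<forall>w m M. bounded_weight w m M \<longrightarrow>
              (\<forall>n i. 1 \<le> n \<and> 1 \<le> i \<and> i \<le> n \<longrightarrow>
                 c * sqrt (m / M) * (real (n + 1 - i) / real n) \<le> sqrt (1 - xi w n i) \<and>
                 sqrt (1 - xi w n i) \<le> C * sqrt (M / m) * (real (n + 1 - i) / real n) \<and>
                 c * sqrt (m / M) * (real i / real n) \<le> sqrt (1 + xi w n i) \<and>
                 sqrt (1 + xi w n i) \<le> C * sqrt (M / m) * (real i / real n)))"
    using xi_sqrt_bounds by (intro exI[of _ 3] exI[of _ "1/5"]) auto
qed

end
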